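(* Consider an open quantum system on a finite-dimensional Hilbert space $\mathcal H$ with Hamiltonian $H$. Let $W_1,\dots,W_N$ be observables commuting with $H$, each positive semidefinite with smallest eigenvalue $0$; let $\widetilde W_n=\sum_{\lambda=1}^nW_\lambda$ and fix $n<N$. Let $L_1,\dots,L_M$ be coupling operators and $L_{M+1},\dots,L_K$ additional coupling operators; $\mathcal G_M,\mathfrak D_M$ denote generator and dissipation functional with couplings $L_1,\dots,L_M$, and $\mathcal G,\mathfrak D$ those with all couplings $L_1,\dots,L_K$; let $d_n$ be the smallest eigenvalue of $\widetilde W_n$. (i) If $\mathcal G_M(\widetilde W_n-d_n)\le-c(\widetilde W_n-d_n)$ for some $c>0$ and $\mathcal G(W_{n+1})+\sum_{k=M+1}^K\mathcal G(\widetilde W_n)_{L_k}\le-cW_{n+1}$, then $\widetilde W_{n+1}$ is asymptotically ground-state stable for the system with couplings $L_1,\dots,L_K$. (ii) If $\mathcal G_M(\widetilde W_n)\le0$ and $\mathfrak D_M(\widetilde W_n-d_n)\ge c(\widetilde W_n-d_n)$ for some $c>0$, if $\mathcal G(W_{n+1})+\sum_{k=M+1}^K\mathcal G(\widetilde W_n)_{L_k}\le0$, and if $\mathfrak D(W_{n+1})+2\sum_{k=1}^K\operatorname{Re}\big([L_k^\dagger,\widetilde W_n][W_{n+1},L_k]\big)\ge cW_{n+1}$, then $\widetilde W_{n+1}$ is asymptotically ground-state stable for the system with couplings $L_1,\dots,L_K$.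
   Context: With couplings $L_1,\dots,L_J$ the density state (positive semidefinite, trace one) evolves by $\dot\rho_t=-i[H,\rho_t]+\sum_{k=1}^J\big(L_k\rho_tL_k^\dagger-\tfrac12L_k^\dagger L_k\rho_t-\tfrac12\rho_tL_k^\dagger L_k\big)$; the generator on observables commuting with $H$ is $\sum_{k=1}^J\mathcal G(X)_{L_k}$, $\mathcal G(X)_{L_k}=L_k^\dagger XL_k-\tfrac12L_k^\dagger L_kX-\tfrac12XL_k^\dagger L_k$, and $\frac{d}{dt}\operatorname{tr}(X\rho_t)=\operatorname{tr}(\mathcal G(X)\rho_t)$. The dissipation functional is $\mathfrak D(X)=\mathcal G(X^\dagger X)-\mathcal G(X^\dagger)X-X^\dagger\mathcal G(X)$, equal to $\sum_k[L_k^\dagger,X][X,L_k]$ for self-adjoint $X$. $\operatorname{Re}(Y)=\tfrac12(Y+Y^\dagger)$. Constants are multiples of the identity. An observable $X$ with smallest eigenvalue $d$ is asymptotically ground-state stable if $\operatorname{tr}(X\rho_t)\to d$ as $t\to\infty$ for every initial density state. *)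

theory Defs
  imports "HOL-Analysis.Analysis"
begin

text \<open>Operators on the finite-dimensional Hilbert space are complex square matrices
  indexed by a finite type 'n (dimension CARD('n)).\<close>

type_synonym 'n cmat = "complex^'n^'n"

definition cadj :: "'n::finite cmat \<Rightarrow> 'n cmat" where
  "cadj A = (\<chi> i j. cnj (A $ j $ i))"

definition hermitian :: "'n::finite cmat \<Rightarrow> bool" where
  "hermitian A \<longleftrightarrow> cadj A = A"

definition psd :: "'n::finite cmat \<Rightarrow> bool" where
  "psd A \<longleftrightarrow> hermitian A \<and>
     (\<forall>v::complex^'n. 0 \<le> Re (\<Sum>i\<in>UNIV. cnj (v $ i) * (A *v v) $ i))"

definition op_le :: "'n::finite cmat \<Rightarrow> 'n cmat \<Rightarrow> bool" where
  "op_le A B \<longleftrightarrow> psd (B - A)"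

definition eigenvalues :: "'n::finite cmat \<Rightarrow> complex set" where
  "eigenvalues A = {\<mu>. \<exists>v::complex^'n. v \<noteq> 0 \<and> A *v v = \<mu> *s v}"

text \<open>Smallest eigenvalue (meant for self-adjoint operators, whose eigenvalues are real).\<close>
definition min_eig :: "'n::finite cmat \<Rightarrow> real" where
  "min_eig A = Min (Re ` eigenvalues A)"

definition const :: "real \<Rightarrow> 'n::finite cmat" where
  "const d = mat (complex_of_real d)"

definition density :: "'n::finite cmat \<Rightarrow> bool" where
  "density \<rho> \<longleftrightarrow> psd \<rho> \<and> trace \<rho> = 1"

definition comm :: "'n::finite cmat \<Rightarrow> 'n cmat \<Rightarrow> 'n cmat" where
  "comm A B = A ** B - B ** A"

definition genL :: "'n::finite cmat \<Rightarrow> 'n cmat \<Rightarrow> 'n cmat" where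
  "genL L X = cadj L ** X ** L - (1/2::real) *\<^sub>R (cadj L ** L ** X)
              - (1/2::real) *\<^sub>R (X ** cadj L ** L)"

text \<open>Heisenberg-picture generator with Hamiltonian H and couplings L k, k \<in> I.
  On observables commuting with H it equals the sum of the genL terms.\<close>
definition gen :: "'n::finite cmat \<Rightarrow> (nat \<Rightarrow> 'n cmat) \<Rightarrow> nat set \<Rightarrow> 'n cmat \<Rightarrow> 'n cmat" where
  "gen H L I X = mat \<i> ** comm H X + (\<Sum>k\<in>I. genL (L k) X)"

definition diss :: "'n::finite cmat \<Rightarrow> (nat \<Rightarrow> 'n cmat) \<Rightarrow> nat set \<Rightarrow> 'n cmat \<Rightarrow> 'n cmat" where
  "diss H L I X = gen H L I (cadj X ** X) - gen H L I (cadj X) ** X - cadj X ** gen H L I X"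

definition mRe :: "'n::finite cmat \<Rightarrow> 'n cmat" where
  "mRe Y = (1/2::real) *\<^sub>R (Y + cadj Y)"

definition lindblad :: "'n::finite cmat \<Rightarrow> (nat \<Rightarrow> 'n cmat) \<Rightarrow> nat set \<Rightarrow> 'n cmat \<Rightarrow> 'n cmat" where
  "lindblad H L I \<rho> = - (mat \<i> ** comm H \<rho>) +
     (\<Sum>k\<in>I. L k ** \<rho> ** cadj (L k) - (1/2::real) *\<^sub>R (cadj (L k) ** L k ** \<rho>)
              - (1/2::real) *\<^sub>R (\<rho> ** cadj (L k) ** L k))"

definition ags_stable :: "'n::finite cmat \<Rightarrow> (nat \<Rightarrow> 'n cmat) \<Rightarrow> nat set \<Rightarrow> 'n cmat \<Rightarrow> bool" where
  "ags_stable H L I X \<longleftrightarrow>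
     (\<forall>\<rho>::real \<Rightarrow> 'n cmat. density (\<rho> 0) \<and>
        (\<forall>t\<ge>0. (\<rho> has_vector_derivative lindblad H L I (\<rho> t)) (at t within {0..}))
        \<longrightarrow> ((\<lambda>t. trace (X ** \<rho> t)) \<longlongrightarrow> complex_of_real (min_eig X)) at_top)"

end

theory Submission
  imports Defs
begin

text \<open>Write \<open>V = W\<^sub>1 + \<dots> + W\<^sub>n\<^sub>+\<^sub>1 - d\<^sub>n\<close>, a positive operator, and split the couplings into the first \<open>M\<close>
  and the remaining ones. Since constants are invisible to the generator and to commutators, the
  hypotheses of (i) add up to \<open>\<G>(V) \<le> -c V\<close>, and those of (ii) to \<open>\<G>(V) \<le> 0\<close> and
  \<open>\<D>(V) \<ge> c V\<close>: the dissipation of a sum is the sum of the dissipations plus twice the real part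
  of the cross commutator terms, and the extra couplings contribute positive squares
  \<open>[L\<^sub>k\<^sup>\<dagger>, V][V, L\<^sub>k]\<close>. Along any solution of the master equation, which stays a density
  operator, \<open>tr (V \<rho>\<^sub>t)\<close> is then a Lyapunov function tending to zero: in case (i) by exponential
  decay, in case (ii) because \<open>tr (V \<rho>\<^sub>t)\<close> decreases while a uniform dissipation rate would drive
  the bounded quantity \<open>tr (V \<rho>\<^sub>t) / s - tr (V\<^sup>2 \<rho>\<^sub>t)\<close> to \<open>-\<infinity>\<close>. Finally \<open>tr (X \<rho>\<^sub>t) \<rightarrow> d\<^sub>n\<close> with
  \<open>X - d\<^sub>n \<ge> 0\<close> forces \<open>d\<^sub>n\<close> to be the smallest eigenvalue of \<open>X\<close>.\<close>

section \<open>Quadratic forms and positive semidefinite operators\<close>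

definition cinner :: "complex^'n::finite \<Rightarrow> complex^'n \<Rightarrow> complex" where
  "cinner x y = (\<Sum>i\<in>UNIV. cnj (x$i) * y$i)"

definition qform :: "'n::finite cmat \<Rightarrow> complex^'n \<Rightarrow> complex" where
  "qform A v = cinner v (A *v v)"

lemma psd_iff_qform: "psd A \<longleftrightarrow> hermitian A \<and> (\<forall>v. 0 \<le> Re (qform A v))"
  by (simp add: psd_def qform_def cinner_def)

lemma cinner_add_right: "cinner x (y + z) = cinner x y + cinner x z"
  by (simp add: cinner_def distrib_left sum.distrib)
lemma cinner_diff_right: "cinner x (y - z) = cinner x y - cinner x z"
  by (simp add: cinner_def right_diff_distrib sum_subtractf)
lemma cinner_diff_left: "cinner (x - y) z = cinner x z - cinner y z"
  by (simp add: cinner_def left_diff_distrib sum_subtractf)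
lemma cinner_scale_right: "cinner x (c *s y) = c * cinner x y"
  by (simp add: cinner_def sum_distrib_left mult_ac)
lemma cinner_scale_left: "cinner (c *s x) y = cnj c * cinner x y"
  by (simp add: cinner_def sum_distrib_left mult_ac)
lemma cinner_scaleR_right: "cinner x (c *\<^sub>R y) = c *\<^sub>R cinner x y"
  by (simp add: cinner_def scaleR_sum_right)
lemma cinner_zero_left [simp]: "cinner 0 y = 0" by (simp add: cinner_def)
lemma cinner_zero_right [simp]: "cinner x 0 = 0" by (simp add: cinner_def)
lemma cnj_cinner: "cnj (cinner x y) = cinner y x"
  by (simp add: cinner_def mult_ac)

lemma cinner_self: "cinner x x = complex_of_real ((norm x)^2)"
proof -
  have "cinner x x = (\<Sum>i\<in>UNIV. complex_of_real ((cmod (x$i))^2))"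
    unfolding cinner_def by (rule sum.cong) (auto simp: complex_norm_square[symmetric] mult.commute)
  also have "\<dots> = complex_of_real (\<Sum>i\<in>UNIV. (cmod (x$i))^2)" by simp
  also have "(\<Sum>i\<in>UNIV. (cmod (x$i))^2) = (norm x)^2"
    by (simp add: norm_vec_def L2_set_def sum_nonneg)
  finally show ?thesis .
qed

lemma inner_eq_Re_cinner: "inner x y = Re (cinner x y)"
  by (simp add: inner_vec_def cinner_def inner_complex_def)

lemma cadj_nth [simp]: "cadj A $ i $ j = cnj (A $ j $ i)"
  by (simp add: cadj_def)

lemma cinner_matrix_vector: "cinner x (A *v y) = cinner (cadj A *v x) y"
  unfolding cinner_def matrix_vector_mult_def
  by (simp add: sum_distrib_left sum_distrib_right mult_ac) (rule sum.swap)

lemma hermitian_cinner: "hermitian A \<Longrightarrow> cinner x (A *v y) = cinner (A *v x) y"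
  by (simp add: cinner_matrix_vector hermitian_def)

lemma hermitian_entry: "hermitian A \<Longrightarrow> cnj (A$i$j) = A$j$i"
  by (metis cadj_nth hermitian_def)

lemma cadj_cadj [simp]: "cadj (cadj A) = A" by (simp add: vec_eq_iff)
lemma cadj_zero [simp]: "cadj 0 = 0" by (simp add: vec_eq_iff)
lemma cadj_add: "cadj (A + B) = cadj A + cadj B" by (simp add: vec_eq_iff)
lemma cadj_diff: "cadj (A - B) = cadj A - cadj B" by (simp add: vec_eq_iff)
lemma cadj_uminus: "cadj (- A) = - cadj A" by (simp add: vec_eq_iff)
lemma cadj_scaleR: "cadj (c *\<^sub>R A) = c *\<^sub>R cadj A" by (simp add: vec_eq_iff)
lemma cadj_mat: "cadj (mat c) = mat (cnj c)" by (simp add: vec_eq_iff mat_def)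
lemma cadj_sum: "cadj (sum f S) = (\<Sum>k\<in>S. cadj (f k))"
  by (induct S rule: infinite_finite_induct) (auto simp: cadj_add)
lemma cadj_mult: "cadj (A ** B) = cadj B ** cadj A"
  by (simp add: vec_eq_iff matrix_matrix_mult_def mult.commute)

lemma hermitian_add: "hermitian A \<Longrightarrow> hermitian B \<Longrightarrow> hermitian (A + B)"
  by (simp add: hermitian_def cadj_add)
lemma hermitian_diff: "hermitian A \<Longrightarrow> hermitian B \<Longrightarrow> hermitian (A - B)"
  by (simp add: hermitian_def cadj_diff)
lemma hermitian_const: "hermitian (const d)"
  by (simp add: hermitian_def const_def cadj_mat)

lemma matrix_add_rdistrib: "((B::'a::semiring_1^'n::finite^'m::finite) + C) ** A = B ** A + C ** A"
  by (vector matrix_matrix_mult_def sum.distrib[symmetric] field_simps)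
lemma matrix_diff_ldistrib: "(A::'a::ring_1^'n::finite^'m::finite) ** (B - C) = A ** B - A ** C"
  by (vector matrix_matrix_mult_def sum_subtractf[symmetric] field_simps)
lemma matrix_diff_rdistrib: "((B::'a::ring_1^'n::finite^'m::finite) - C) ** A = B ** A - C ** A"
  by (vector matrix_matrix_mult_def sum_subtractf[symmetric] field_simps)
lemma matrix_uminus_left: "(- B::'a::ring_1^'n::finite^'m::finite) ** A = - (B ** A)"
  by (vector matrix_matrix_mult_def sum_negf[symmetric])
lemma matrix_uminus_right: "(A::'a::ring_1^'n::finite^'m::finite) ** (- B) = - (A ** B)"
  by (vector matrix_matrix_mult_def sum_negf[symmetric])
lemma matrix_sum_ldistrib: "(A::'a::semiring_1^'n::finite^'m::finite) ** sum f S = (\<Sum>k\<in>S. A ** f k)"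
  by (induct S rule: infinite_finite_induct) (auto simp: matrix_add_ldistrib)
lemma matrix_sum_rdistrib: "sum f S ** (A::'a::semiring_1^'n::finite^'m::finite) = (\<Sum>k\<in>S. f k ** A)"
  by (induct S rule: infinite_finite_induct) (auto simp: matrix_add_rdistrib)
lemma matrix_scaleR_left: "(k *\<^sub>R A) ** (B::complex^'n::finite^'n) = k *\<^sub>R (A ** B)"
  by (simp add: scalar_matrix_assoc)
lemma matrix_scaleR_right: "(A::complex^'n::finite^'n) ** (k *\<^sub>R B) = k *\<^sub>R (A ** B)"
  by (simp add: matrix_scalar_ac scalar_matrix_assoc)

lemma mat_mult_left: "mat c ** (A::'a::semiring_1^'n::finite^'n) = map_matrix ((*) c) A"
  unfolding matrix_matrix_mult_def mat_def
  by (auto simp: vec_eq_iff if_distrib if_distribR sum.delta'[OF finite] cong: if_cong)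
lemma mat_mult_right: "(A::'a::comm_semiring_1^'n::finite^'n) ** mat c = map_matrix ((*) c) A"
  unfolding matrix_matrix_mult_def mat_def
  by (auto simp: vec_eq_iff if_distrib if_distribR sum.delta'[OF finite] mult.commute cong: if_cong)
lemma mat_mult_commute: "(A::'a::comm_semiring_1^'n::finite^'n) ** mat c = mat c ** A"
  by (simp add: mat_mult_left mat_mult_right)

lemmas matrix_algebra_simps = matrix_add_ldistrib matrix_add_rdistrib matrix_diff_ldistrib
  matrix_diff_rdistrib matrix_uminus_left matrix_uminus_right matrix_scaleR_left
  matrix_scaleR_right matrix_sum_ldistrib matrix_sum_rdistrib matrix_mul_assoc

lemma trace_zero [simp]: "trace (0::'a::semiring_1^'n::finite^'n) = 0"
  by (simp add: trace_def)
lemma trace_sum: "trace (sum f S) = (\<Sum>k\<in>S. trace (f k :: 'a::comm_semiring_1^'n::finite^'n))"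
  by (induct S rule: infinite_finite_induct) (auto simp: trace_add)
lemma trace_uminus: "trace (- (A::'a::comm_ring_1^'n::finite^'n)) = - trace A"
  by (simp add: trace_def sum_negf)
lemma trace_scaleR: "trace (c *\<^sub>R (A::complex^'n::finite^'n)) = c *\<^sub>R trace A"
  by (simp add: trace_def scaleR_sum_right)
lemma trace_cadj: "trace (cadj A) = cnj (trace A)"
  by (simp add: trace_def)
lemma trace_mat_mult: "trace (mat c ** (A::'a::comm_semiring_1^'n::finite^'n)) = c * trace A"
  by (simp add: mat_mult_left trace_def sum_distrib_left)
lemma trace_const_mult: "trace (const c ** \<rho>) = complex_of_real c * trace (\<rho>::'n::finite cmat)"
  by (simp add: const_def trace_mat_mult)

lemma matrix_vector_scale_right: "A *v (c *s x) = c *s (A *v (x::'a::comm_semiring_1^'n::finite))"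
  by (vector matrix_vector_mult_def sum_distrib_left mult_ac)
lemma matrix_vector_scaleR_left: "(c *\<^sub>R A) *v (x::complex^'n::finite) = c *\<^sub>R (A *v x)"
  by (vector matrix_vector_mult_def scaleR_sum_right)
lemma mat_matrix_vector: "mat c *v (x::'a::semiring_1^'n::finite) = c *s x"
  unfolding matrix_vector_mult_def mat_def
  by (auto simp: vec_eq_iff if_distrib if_distribR sum.delta'[OF finite] cong: if_cong)

lemma qform_zero [simp]: "qform 0 v = 0"
  by (simp add: qform_def cinner_def)
lemma qform_zero_vector [simp]: "qform A 0 = 0"
  by (simp add: qform_def cinner_def)
lemma qform_add: "qform (A + B) v = qform A v + qform B v"
  by (simp add: qform_def matrix_vector_mult_add_rdistrib cinner_add_right)
lemma qform_diff: "qform (A - B) v = qform A v - qform B v"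
  by (simp add: qform_def matrix_vector_mult_diff_rdistrib cinner_diff_right)
lemma qform_uminus: "qform (- A) v = - qform A v"
  by (simp add: qform_def cinner_def matrix_vector_mult_def sum_negf)
lemma qform_scaleR: "qform (c *\<^sub>R A) v = c *\<^sub>R qform A v"
  by (simp add: qform_def matrix_vector_scaleR_left cinner_scaleR_right)
lemma qform_sum: "qform (sum f S) v = (\<Sum>k\<in>S. qform (f k) v)"
  by (induct S rule: infinite_finite_induct) (auto simp: qform_add)
lemma qform_const: "qform (const d) v = complex_of_real (d * (norm v)^2)"
  by (simp add: qform_def const_def mat_matrix_vector cinner_scale_right cinner_self)
lemma qform_mult: "qform (A ** B) v = cinner (cadj A *v v) (B *v v)"
  by (simp add: qform_def cinner_matrix_vector matrix_vector_mul_assoc[symmetric])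
lemma qform_axis: "qform A (axis a 1) = A$a$a"
  by (simp add: qform_def cinner_def matrix_vector_mult_def axis_def if_distrib if_distribR
      sum.delta' cong: if_cong)

lemma qform_scaleR_vector: "qform A (c *\<^sub>R v) = complex_of_real (c^2) * qform A v"
proof -
  have "c *\<^sub>R v = complex_of_real c *s v"
    by (simp add: vec_eq_iff del: scaleR_conv_of_real) (simp add: scaleR_conv_of_real)
  then show ?thesis
    by (simp add: qform_def matrix_vector_scale_right cinner_scale_right cinner_scale_left
        power2_eq_square mult_ac)
qed

lemma qform_diff_scale:
  "qform A (v - c *s w) =
     qform A v - c * cinner v (A *v w) - cnj c * cinner w (A *v v) + cnj c * c * qform A w"
  by (simp add: qform_def matrix_vector_mult_diff_distrib matrix_vector_scale_right
      cinner_diff_left cinner_diff_right cinner_scale_left cinner_scale_right algebra_simps)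

lemma cmod_qform_le: "cmod (qform A v) \<le> (\<Sum>i\<in>UNIV. \<Sum>j\<in>UNIV. cmod (A$i$j)) * (norm v)^2"
proof -
  have "cmod (qform A v) = cmod (\<Sum>i\<in>UNIV. \<Sum>j\<in>UNIV. cnj (v$i) * A$i$j * v$j)"
    by (simp add: qform_def cinner_def matrix_vector_mult_def sum_distrib_left mult_ac)
  also have "\<dots> \<le> (\<Sum>i\<in>UNIV. \<Sum>j\<in>UNIV. cmod (cnj (v$i) * A$i$j * v$j))"
    by (rule order_trans[OF norm_sum sum_mono[OF order_trans[OF norm_sum]]]) auto
  also have "\<dots> \<le> (\<Sum>i\<in>UNIV. \<Sum>j\<in>UNIV. cmod (A$i$j) * (norm v)^2)"
  proof (intro sum_mono)
    fix i j
    have "cmod (v$i) * cmod (v$j) \<le> norm v * norm v"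
      by (intro mult_mono Finite_Cartesian_Product.norm_nth_le) auto
    then have "cmod (A$i$j) * (cmod (v$i) * cmod (v$j)) \<le> cmod (A$i$j) * (norm v * norm v)"
      by (rule mult_left_mono) simp
    then show "cmod (cnj (v$i) * A$i$j * v$j) \<le> cmod (A$i$j) * (norm v)^2"
      by (simp add: norm_mult power2_eq_square mult_ac)
  qed
  finally show ?thesis by (simp add: sum_distrib_right)
qed

lemma hermitian_qform_real: "hermitian A \<Longrightarrow> Im (qform A v) = 0"
proof -
  assume "hermitian A"
  then have "cnj (qform A v) = qform A v"
    by (simp add: qform_def cnj_cinner cinner_matrix_vector hermitian_def)
  then show ?thesis by (metis Reals_cnj_iff complex_is_Real_iff)
qed

lemma continuous_on_Re_qform: "continuous_on S (\<lambda>v. Re (qform A v))"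
  unfolding qform_def cinner_def matrix_vector_mult_def
  by (intro continuous_intros)

lemma psd_if_unit_qform_nonneg:
  assumes "hermitian A" and unit: "\<And>v. norm v = 1 \<Longrightarrow> 0 \<le> Re (qform A v)"
  shows "psd A"
proof -
  have "0 \<le> Re (qform A v)" for v
  proof (cases "v = 0")
    case True
    then show ?thesis by (simp add: qform_def cinner_def)
  next
    case False
    then have "0 \<le> Re (qform A ((1 / norm v) *\<^sub>R v))" by (intro unit) simp
    then show ?thesis using False by (simp add: qform_scaleR_vector zero_le_mult_iff)
  qed
  with assms show ?thesis by (simp add: psd_iff_qform)
qed

lemma psd_zero: "psd (0::'n::finite cmat)"
  by (simp add: psd_iff_qform hermitian_def)
lemma psd_add: "psd A \<Longrightarrow> psd B \<Longrightarrow> psd (A + B)"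
  by (simp add: psd_iff_qform hermitian_add qform_add)
lemma psd_sum: "(\<And>k. k \<in> S \<Longrightarrow> psd (f k)) \<Longrightarrow> psd (sum f S :: 'n::finite cmat)"
  by (induct S rule: infinite_finite_induct) (auto simp: psd_zero psd_add)
lemma psd_imp_hermitian: "psd A \<Longrightarrow> hermitian A"
  by (simp add: psd_def)
lemma op_le_add: "op_le A B \<Longrightarrow> op_le C D \<Longrightarrow> op_le (A + C) (B + D)"
  unfolding op_le_def using psd_add by (metis add_diff_add)

lemma psd_sandwich: "psd P \<Longrightarrow> psd (B ** P ** cadj B)"
proof -
  assume "psd P"
  moreover have "qform (B ** P ** cadj B) v = qform P (cadj B *v v)" for v
    unfolding qform_def by (simp only: matrix_vector_mul_assoc[symmetric] cinner_matrix_vector[of v B])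
  ultimately show ?thesis by (simp add: psd_iff_qform hermitian_def cadj_mult matrix_mul_assoc)
qed

lemma psd_cadj_mult_self: "psd (cadj A ** A)"
proof -
  have "qform (cadj A ** A) v = complex_of_real ((norm (A *v v))^2)" for v
    by (simp only: qform_mult cadj_cadj cinner_self)
  then show ?thesis by (simp add: psd_iff_qform hermitian_def cadj_mult)
qed

lemma psd_qform_zero_imp_kernel:
  assumes "psd A" and zero: "Re (qform A v) = 0"
  shows "A *v v = 0"
proof -
  let ?w = "A *v v"
  have herm: "hermitian A" and nonneg: "\<And>x. 0 \<le> Re (qform A x)"
    using assms(1) by (auto simp: psd_iff_qform)
  define R where "R = Re (qform A ?w)"
  define N where "N = (norm ?w)^2"
  \<comment> \<open>along the line \<open>v - s A v\<close> the form is \<open>- 2 s N + s\<^sup>2 R \<ge> 0\<close>, forcing \<open>N = 0\<close>\<close>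
  have line: "0 \<le> - 2 * s * N + s * s * R" for s :: real
  proof -
    have "cinner v (A *v ?w) = cinner ?w ?w" using hermitian_cinner[OF herm] by simp
    then have "Re (qform A (v - complex_of_real s *s ?w)) = - 2 * s * N + s * s * R"
      using zero by (simp add: qform_diff_scale cinner_self N_def R_def)
    then show ?thesis using nonneg by metis
  qed
  have "N = 0"
  proof (rule ccontr)
    assume "N \<noteq> 0"
    then have "N > 0" by (simp add: N_def)
    moreover have "R \<ge> 0" using nonneg by (simp add: R_def)
    moreover define s where "s = N / (R + 1)"
    ultimately have "s > 0" and "s * R < N" by (simp_all add: s_def field_simps)
    moreover have "0 \<le> s * (- 2 * N + s * R)" using line[of s] by (simp add: algebra_simps)
    ultimately show False using \<open>N > 0\<close> by (simp add: zero_le_mult_iff)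
  qed
  then show ?thesis by (simp add: N_def)
qed

definition outer :: "complex^'n::finite \<Rightarrow> 'n cmat" where
  "outer u = (\<chi> i j. u$i * cnj (u$j))"

lemma qform_outer: "qform (outer u) v = complex_of_real ((cmod (cinner u v))^2)"
proof -
  have "qform (outer u) v = cinner v u * cinner u v"
    by (simp add: qform_def outer_def cinner_def matrix_vector_mult_def sum_distrib_left
        sum_distrib_right mult_ac) (rule sum.swap)
  also have "\<dots> = cnj (cinner u v) * cinner u v" by (simp add: cnj_cinner)
  finally show ?thesis using complex_norm_square by (metis mult.commute)
qed

lemma outer_zero [simp]: "outer 0 = 0"
  by (simp add: outer_def vec_eq_iff)

lemma hermitian_outer: "hermitian (outer u)"
  by (simp add: hermitian_def vec_eq_iff outer_def)

lemma trace_mult_outer: "trace (P ** outer u) = qform P u"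
  by (simp add: trace_def matrix_matrix_mult_def outer_def qform_def cinner_def
      matrix_vector_mult_def sum_distrib_left mult_ac)

lemma psd_zero_diagonal_row:
  assumes "psd A" and "A$a$a = 0"
  shows "A$a$j = 0"
proof -
  have "A *v axis a 1 = 0"
    using assms by (intro psd_qform_zero_imp_kernel) (simp_all add: qform_axis)
  then have "A$j$a = 0"
    by (simp add: vec_eq_iff matrix_vector_mult_def axis_def if_distrib if_distribR sum.delta'
        cong: if_cong)
  then show ?thesis using hermitian_entry[OF psd_imp_hermitian[OF assms(1)], of j a] by simp
qed

text \<open>One step of the Cholesky-type decomposition: subtracting the rank-one operator built from
  the \<open>a\<close>-th column, normalised by the positive pivot \<open>A$a$a\<close>, keeps \<open>A\<close> positive and clears
  row \<open>a\<close>.\<close>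
lemma psd_minus_outer_column:
  assumes psd: "psd A" and pivot: "0 < Re (A$a$a)"
  defines "u \<equiv> complex_of_real (1 / sqrt (Re (A$a$a))) *s (A *v axis a 1)"
  shows "psd (A - outer u)" and "outer u $ i $ j = A$i$a * A$a$j / A$a$a"
proof -
  define r where "r = Re (A$a$a)"
  have herm: "hermitian A" and nonneg: "\<And>x. 0 \<le> Re (qform A x)"
    using psd by (auto simp: psd_iff_qform)
  have Aaa: "A$a$a = complex_of_real r"
    using hermitian_qform_real[OF herm, of "axis a 1"] by (simp add: qform_axis r_def complex_eq_iff)
  have r: "r > 0" using pivot by (simp add: r_def)
  have column: "(A *v axis a 1) $ i = A$i$a" for i
    by (simp add: matrix_vector_mult_def axis_def if_distrib if_distribR sum.delta' cong: if_cong)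
  have scale: "complex_of_real (sqrt r) * complex_of_real (sqrt r) = complex_of_real r"
    using r by (simp flip: of_real_mult)
  show "outer u $ i $ j = A$i$a * A$a$j / A$a$a"
    using hermitian_entry[OF herm, of j a]
    by (simp add: outer_def u_def column r_def[symmetric] Aaa mult_ac scale)
  have "0 \<le> Re (qform (A - outer u) v)" for v
  proof -
    define z where "z = cinner (A *v axis a 1) v"
    define c where "c = z / complex_of_real r"
    have "cinner v (A *v axis a 1) = cnj z" "cinner (axis a 1) (A *v v) = z"
      by (simp_all add: z_def cnj_cinner hermitian_cinner[OF herm])
    then have "qform A (v - c *s axis a 1)
        = qform A v - c * cnj z - cnj c * z + cnj c * c * complex_of_real r"
      by (simp add: qform_diff_scale qform_axis Aaa)
    also have "\<dots> = qform A v - z * cnj z / complex_of_real r"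
      using r by (simp add: c_def field_simps)
    also have "\<dots> = qform A v - complex_of_real ((cmod z)^2 / r)"
      by (simp only: of_real_divide complex_norm_square)
    finally have "(cmod z)^2 / r \<le> Re (qform A v)"
      using nonneg[of "v - c *s axis a 1"] by simp
    moreover have "(cmod (cinner u v))^2 = (cmod z)^2 / r"
      using r by (simp add: u_def z_def r_def[symmetric] cinner_scale_left norm_divide power_divide)
    ultimately show ?thesis by (simp add: qform_diff qform_outer)
  qed
  then show "psd (A - outer u)"
    using hermitian_diff[OF herm hermitian_outer] by (simp add: psd_iff_qform)
qed

lemma psd_eq_sum_outer_on:
  assumes "finite S"
  shows "psd A \<Longrightarrow> (\<And>i j. i \<notin> S \<Longrightarrow> A$i$j = 0) \<Longrightarrow> \<exists>U. A = (\<Sum>k\<in>S. outer (U k))"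
  using assms
proof (induction S arbitrary: A rule: finite_induct)
  case empty
  then show ?case by (auto simp: vec_eq_iff)
next
  case (insert a S A)
  have sum_upd: "(\<Sum>k\<in>insert a S. outer ((U(a := u)) k)) = outer u + (\<Sum>k\<in>S. outer (U k))"
    for U u
  proof -
    have "(\<Sum>k\<in>S. outer ((U(a := u)) k)) = (\<Sum>k\<in>S. outer (U k))"
      by (rule sum.cong) (use insert.hyps in auto)
    then show ?thesis using insert.hyps by simp
  qed
  show ?case
  proof (cases "Re (A$a$a) = 0")
    case True
    have "A$a$a = 0"
      using True hermitian_qform_real[OF psd_imp_hermitian[OF insert.prems(1)], of "axis a 1"]
      by (simp add: qform_axis complex_eq_iff)
    then have "A$i$j = 0" if "i \<notin> S" for i j
      using that psd_zero_diagonal_row[OF insert.prems(1)] insert.prems(2) by (cases "i = a") auto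
    then obtain U where "A = (\<Sum>k\<in>S. outer (U k))" using insert.IH[OF insert.prems(1)] by blast
    then have "A = (\<Sum>k\<in>insert a S. outer ((U(a := 0)) k))"
      unfolding sum_upd by simp
    then show ?thesis by blast
  next
    case False
    then have pivot: "0 < Re (A$a$a)"
      using insert.prems(1) by (simp add: psd_iff_qform less_le flip: qform_axis)
    define u where "u = complex_of_real (1 / sqrt (Re (A$a$a))) *s (A *v axis a 1)"
    note peel = psd_minus_outer_column[OF insert.prems(1) pivot, folded u_def]
    have "(A - outer u)$i$j = 0" if "i \<notin> S" for i j
      using that pivot insert.prems(2)[of i] by (cases "i = a") (auto simp: peel(2))
    then obtain U where "A - outer u = (\<Sum>k\<in>S. outer (U k))" using insert.IH[OF peel(1)] by blast
    then have "A = (\<Sum>k\<in>insert a S. outer ((U(a := u)) k))"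
      unfolding sum_upd by (simp add: algebra_simps)
    then show ?thesis by blast
  qed
qed

lemma psd_eq_sum_outer:
  fixes A :: "'n::finite cmat"
  shows "psd A \<Longrightarrow> \<exists>U. A = (\<Sum>k\<in>(UNIV::'n set). outer (U k))"
  using psd_eq_sum_outer_on[of "UNIV::'n set" A] by simp

lemma trace_mult_psd_nonneg:
  fixes P \<rho> :: "'n::finite cmat"
  assumes "psd P" "psd \<rho>"
  shows "0 \<le> Re (trace (P ** \<rho>))"
proof -
  obtain U :: "'n \<Rightarrow> complex^'n" where "\<rho> = (\<Sum>k\<in>UNIV. outer (U k))"
    using psd_eq_sum_outer[OF assms(2)] by blast
  then have "trace (P ** \<rho>) = (\<Sum>k\<in>UNIV. qform P (U k))"
    by (simp add: matrix_sum_ldistrib trace_sum trace_mult_outer)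
  then show ?thesis using assms(1) by (simp add: psd_iff_qform sum_nonneg)
qed

lemma trace_mult_mono:
  assumes "psd \<rho>" "op_le A B"
  shows "Re (trace (A ** \<rho>)) \<le> Re (trace (B ** \<rho>))"
  using trace_mult_psd_nonneg[of "B - A" \<rho>] assms
  by (simp add: op_le_def matrix_diff_rdistrib trace_sub)

lemma trace_mult_hermitian_real:
  assumes "hermitian P" "hermitian \<rho>"
  shows "Im (trace (P ** \<rho>)) = 0"
proof -
  have "cnj (trace (P ** \<rho>)) = trace (P ** \<rho>)"
    using assms by (simp only: trace_cadj[symmetric] cadj_mult hermitian_def trace_mul_sym[of \<rho> P])
  then show ?thesis by (metis Reals_cnj_iff complex_is_Real_iff)
qed

lemma trace_mult_density_le:
  assumes "hermitian Q" "density \<rho>"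
  shows "Re (trace (Q ** \<rho>)) \<le> (\<Sum>i\<in>UNIV. \<Sum>j\<in>UNIV. cmod (Q$i$j))"
proof -
  define b where "b = (\<Sum>i\<in>UNIV. \<Sum>j\<in>UNIV. cmod (Q$i$j))"
  have "Re (qform Q v) \<le> b * (norm v)^2" for v
    using cmod_qform_le[of Q v] abs_Re_le_cmod[of "qform Q v"] by (simp add: b_def)
  then have "op_le Q (const b)"
    using hermitian_diff[OF hermitian_const assms(1)]
    by (simp add: op_le_def psd_iff_qform qform_diff qform_const)
  moreover have "psd \<rho>" "trace \<rho> = 1" using assms(2) by (simp_all add: density_def)
  ultimately show ?thesis using trace_mult_mono[of \<rho> Q "const b"] by (simp add: trace_const_mult b_def)
qed

section \<open>The smallest eigenvalue\<close>

lemma qform_eigenvector: "X *v v = \<mu> *s v \<Longrightarrow> qform X v = \<mu> * complex_of_real ((norm v)^2)"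
  by (simp add: qform_def cinner_scale_right cinner_self)

lemma hermitian_eigenvalue_real:
  assumes "hermitian X" "X *v v = \<mu> *s v" "v \<noteq> 0"
  shows "Im \<mu> = 0"
  using hermitian_qform_real[OF assms(1), of v] qform_eigenvector[OF assms(2)] assms(3) by simp

lemma hermitian_qform_min_eigenvector:
  fixes X :: "'n::finite cmat"
  assumes herm: "hermitian X"
  shows "\<exists>m u. u \<noteq> 0 \<and> (\<forall>v. m * (norm v)^2 \<le> Re (qform X v)) \<and> X *v u = complex_of_real m *s u"
proof -
  let ?S = "sphere (0::complex^'n) 1"
  obtain i :: 'n where True by blast
  have "norm (axis i (1::complex)) = 1" by simp
  then have "?S \<noteq> {}" by (metis mem_sphere_0 empty_iff)
  then obtain u where uS: "u \<in> ?S" and umin: "\<forall>y\<in>?S. Re (qform X u) \<le> Re (qform X y)"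
    using continuous_attains_inf[OF compact_sphere _ continuous_on_Re_qform] by blast
  define m where "m = Re (qform X u)"
  have bound: "m * (norm v)^2 \<le> Re (qform X v)" for v
  proof (cases "v = 0")
    case True
    then show ?thesis by simp
  next
    case False
    then have "m \<le> Re (qform X ((1 / norm v) *\<^sub>R v))" using umin by (simp add: m_def)
    then show ?thesis using False by (simp add: qform_scaleR_vector field_simps)
  qed
  have "psd (X - const m)"
    using hermitian_diff[OF herm hermitian_const] bound by (simp add: psd_iff_qform qform_diff qform_const)
  moreover have "Re (qform (X - const m) u) = 0" using uS by (simp add: qform_diff qform_const m_def)
  ultimately have "(X - const m) *v u = 0" by (rule psd_qform_zero_imp_kernel)
  then have "X *v u = complex_of_real m *s u"
    by (simp add: matrix_vector_mult_diff_rdistrib const_def mat_matrix_vector)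
  moreover have "u \<noteq> 0" using uS by auto
  ultimately show ?thesis using bound by blast
qed

lemma finite_eigenvalues:
  fixes X :: "'n::finite cmat"
  assumes herm: "hermitian X"
  shows "finite (eigenvalues X)"
proof -
  define g where "g \<mu> = (SOME v. v \<noteq> 0 \<and> X *v v = \<mu> *s v)" for \<mu>
  have g: "g \<mu> \<noteq> 0 \<and> X *v g \<mu> = \<mu> *s g \<mu>" if "\<mu> \<in> eigenvalues X" for \<mu>
  proof -
    from that obtain v where "v \<noteq> 0 \<and> X *v v = \<mu> *s v" by (auto simp: eigenvalues_def)
    then show ?thesis unfolding g_def by (rule someI)
  qed
  have inj: "inj_on g (eigenvalues X)"
  proof (rule inj_onI)
    fix a b assume a: "a \<in> eigenvalues X" and b: "b \<in> eigenvalues X" and "g a = g b"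
    then have "a *s g a = b *s g a" using g[OF a] g[OF b] by metis
    then show "a = b" using g[OF a] vector_mul_rcancel by blast
  qed
  have "pairwise orthogonal (g ` eigenvalues X)"
  proof (clarsimp simp: pairwise_def)
    fix a b assume a: "a \<in> eigenvalues X" and b: "b \<in> eigenvalues X" and "g a \<noteq> g b"
    then have "a \<noteq> b" by auto
    have "Im a = 0" using hermitian_eigenvalue_real[OF herm, of "g a" a] g[OF a] by blast
    then have "cnj a = a" by (simp add: complex_eq_iff)
    then have "b * cinner (g a) (g b) = a * cinner (g a) (g b)"
      using hermitian_cinner[OF herm, of "g a" "g b"] g[OF a] g[OF b]
      by (simp add: cinner_scale_right cinner_scale_left)
    then have "cinner (g a) (g b) = 0" using \<open>a \<noteq> b\<close> by simp
    then show "orthogonal (g a) (g b)" by (simp add: orthogonal_def inner_eq_Re_cinner)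
  qed
  moreover have "0 \<notin> g ` eigenvalues X" using g by auto
  ultimately have "finite (g ` eigenvalues X)"
    using pairwise_orthogonal_independent independent_bound by blast
  then show ?thesis using finite_imageD[OF _ inj] by blast
qed

lemma min_eig_eigenvector:
  fixes X :: "'n::finite cmat"
  assumes herm: "hermitian X"
  shows "(\<forall>v. min_eig X * (norm v)^2 \<le> Re (qform X v))
     \<and> (\<exists>u. u \<noteq> 0 \<and> X *v u = complex_of_real (min_eig X) *s u)"
proof -
  obtain m u where u: "u \<noteq> 0" and bound: "\<forall>v. m * (norm v)^2 \<le> Re (qform X v)"
    and eigen: "X *v u = complex_of_real m *s u"
    using hermitian_qform_min_eigenvector[OF herm] by blast
  have "min_eig X = m"
    unfolding min_eig_def
  proof (rule Min_eqI)
    show "finite (Re ` eigenvalues X)" using finite_eigenvalues[OF herm] by simp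
    show "m \<in> Re ` eigenvalues X"
      using u eigen by (auto simp: eigenvalues_def image_iff intro!: exI[of _ "complex_of_real m"])
  next
    fix y assume "y \<in> Re ` eigenvalues X"
    then obtain \<mu> v where y: "y = Re \<mu>" and v: "v \<noteq> 0" "X *v v = \<mu> *s v"
      by (auto simp: eigenvalues_def)
    moreover have "Re (qform X v) = Re \<mu> * (norm v)^2" using qform_eigenvector[OF v(2)] by simp
    ultimately have "m * (norm v)^2 \<le> Re \<mu> * (norm v)^2" using bound by metis
    then show "m \<le> y" using v(1) y by simp
  qed
  then show ?thesis using bound u eigen by auto
qed

lemma psd_minus_min_eig: "hermitian X \<Longrightarrow> psd (X - const (min_eig X))"
  using min_eig_eigenvector[of X] hermitian_diff[OF _ hermitian_const]
  by (simp add: psd_iff_qform qform_diff qform_const)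

lemma min_eig_greatest:
  assumes herm: "hermitian X" and "psd (X - const d)"
  shows "d \<le> min_eig X"
proof -
  obtain u where "u \<noteq> 0" "X *v u = complex_of_real (min_eig X) *s u"
    using min_eig_eigenvector[OF herm] by blast
  moreover have "d * (norm u)^2 \<le> Re (qform X u)"
    using assms(2) by (simp add: psd_iff_qform qform_diff qform_const)
  ultimately show ?thesis using qform_eigenvector by fastforce
qed

section \<open>The generator, the master equation and the dissipation functional\<close>

lemma trace_mult_sandwich: "trace (X ** (A ** \<rho> ** B)) = trace ((B ** X ** A) ** (\<rho>::'n::finite cmat))"
proof -
  have "trace (X ** (A ** \<rho> ** B)) = trace ((X ** A ** \<rho>) ** B)" by (simp add: matrix_mul_assoc)
  also have "\<dots> = trace (B ** (X ** A ** \<rho>))" by (rule trace_mul_sym)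
  finally show ?thesis by (simp add: matrix_mul_assoc)
qed

lemma trace_mult_right: "trace (X ** (\<rho> ** B)) = trace ((B ** X) ** (\<rho>::'n::finite cmat))"
  using trace_mult_sandwich[of X "mat 1" \<rho> B] by simp

lemma trace_mult_genL: "trace (X ** (L ** \<rho> ** cadj L - (1/2::real) *\<^sub>R (cadj L ** L ** \<rho>)
    - (1/2::real) *\<^sub>R (\<rho> ** cadj L ** L))) = trace (genL L X ** (\<rho>::'n::finite cmat))"
proof -
  have right: "trace (X ** (\<rho> ** cadj L ** L)) = trace ((cadj L ** L ** X) ** \<rho>)"
    using trace_mult_right[of X \<rho> "cadj L ** L"] by (simp only: matrix_mul_assoc)
  have "trace (X ** (L ** \<rho> ** cadj L - (1/2::real) *\<^sub>R (cadj L ** L ** \<rho>)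
      - (1/2::real) *\<^sub>R (\<rho> ** cadj L ** L)))
    = trace (X ** (L ** \<rho> ** cadj L)) - (1/2::real) *\<^sub>R trace (X ** (cadj L ** L ** \<rho>))
      - (1/2::real) *\<^sub>R trace (X ** (\<rho> ** cadj L ** L))"
    by (simp only: matrix_diff_ldistrib matrix_scaleR_right trace_sub trace_scaleR)
  also have "\<dots> = trace ((cadj L ** X ** L) ** \<rho>) - (1/2::real) *\<^sub>R trace ((X ** cadj L ** L) ** \<rho>)
      - (1/2::real) *\<^sub>R trace ((cadj L ** L ** X) ** \<rho>)"
    by (simp only: trace_mult_sandwich[of X L \<rho> "cadj L"] right) (simp add: matrix_mul_assoc)
  also have "\<dots> = trace (genL L X ** \<rho>)"
    by (simp only: genL_def matrix_diff_rdistrib matrix_scaleR_left trace_sub trace_scaleR) simp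
  finally show ?thesis .
qed

lemma trace_mult_hamiltonian:
  "trace (X ** (- (mat \<i> ** comm H \<rho>))) = trace ((mat \<i> ** comm H X) ** (\<rho>::'n::finite cmat))"
proof -
  have "trace (X ** (- (mat \<i> ** comm H \<rho>))) = - (\<i> * (trace (X ** (H ** \<rho>)) - trace (X ** (\<rho> ** H))))"
    by (simp only: comm_def matrix_uminus_right trace_uminus matrix_mul_assoc mat_mult_commute
        matrix_diff_ldistrib trace_sub)
      (simp add: matrix_mul_assoc[symmetric] trace_mat_mult right_diff_distrib)
  also have "\<dots> = \<i> * (trace ((H ** X) ** \<rho>) - trace ((X ** H) ** \<rho>))"
    by (simp only: trace_mult_right[of X \<rho> H]) (simp add: matrix_mul_assoc algebra_simps)
  also have "\<dots> = trace ((mat \<i> ** comm H X) ** \<rho>)"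
    by (simp add: comm_def matrix_mul_assoc[symmetric] trace_mat_mult matrix_diff_rdistrib trace_sub
        right_diff_distrib)
  finally show ?thesis .
qed

lemma trace_mult_lindblad: "trace (X ** lindblad H L I \<rho>) = trace (gen H L I X ** (\<rho>::'n::finite cmat))"
  unfolding lindblad_def gen_def matrix_add_ldistrib matrix_add_rdistrib trace_add
    matrix_sum_ldistrib matrix_sum_rdistrib trace_sum
  by (simp add: trace_mult_genL trace_mult_hamiltonian)

lemma genL_add: "genL L (X + Y) = genL L X + genL L (Y::'n::finite cmat)"
  by (simp add: genL_def matrix_algebra_simps algebra_simps)
lemma genL_diff: "genL L (X - Y) = genL L X - genL L (Y::'n::finite cmat)"
  by (simp add: genL_def matrix_algebra_simps algebra_simps)
lemma comm_add_right: "comm A (X + Y) = comm A X + comm A (Y::'n::finite cmat)"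
  by (simp add: comm_def matrix_algebra_simps algebra_simps)
lemma comm_add_left: "comm (X + Y) A = comm X A + comm Y (A::'n::finite cmat)"
  by (simp add: comm_def matrix_algebra_simps algebra_simps)
lemma comm_diff_right: "comm A (X - Y) = comm A X - comm A (Y::'n::finite cmat)"
  by (simp add: comm_def matrix_algebra_simps algebra_simps)
lemma comm_scaleR_right: "comm A (c *\<^sub>R X) = c *\<^sub>R comm A (X::'n::finite cmat)"
  by (simp add: comm_def matrix_algebra_simps algebra_simps)
lemma comm_const_right: "comm A (const d :: 'n::finite cmat) = 0"
  by (simp add: comm_def const_def mat_mult_commute)

lemma gen_add: "gen H L I (X + Y) = gen H L I X + gen H L I (Y::'n::finite cmat)"
  by (simp add: gen_def genL_add comm_add_right matrix_add_ldistrib sum.distrib algebra_simps)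
lemma gen_diff: "gen H L I (X - Y) = gen H L I X - gen H L I (Y::'n::finite cmat)"
  by (simp add: gen_def genL_diff comm_diff_right matrix_diff_ldistrib sum_subtractf algebra_simps)

lemma genL_const: "genL L (const d :: 'n::finite cmat) = 0"
proof -
  have "Y - (1/2::real) *\<^sub>R Y - (1/2::real) *\<^sub>R Y = 0" for Y :: "'n cmat"
    by (simp add: algebra_simps flip: scaleR_add_left)
  then show ?thesis by (simp add: genL_def const_def matrix_algebra_simps mat_mult_commute)
qed

lemma gen_const: "gen H L I (const d :: 'n::finite cmat) = 0"
  by (simp add: gen_def comm_const_right genL_const)

lemma gen_union:
  assumes "finite I" "finite J" "I \<inter> J = {}"
  shows "gen H L (I \<union> J) X = gen H L I X + (\<Sum>k\<in>J. genL (L k) X)"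
  using assms by (simp add: gen_def sum.union_disjoint algebra_simps)

lemma genL_square_defect:
  "genL L (X ** X) - genL L X ** X - X ** genL L X = comm (cadj L) X ** comm X (L::'n::finite cmat)"
proof -
  have "(2::real) *\<^sub>R (genL L (X ** X) - genL L X ** X - X ** genL L X)
      = (2::real) *\<^sub>R (comm (cadj L) X ** comm X L)"
    by (simp add: genL_def comm_def matrix_algebra_simps scaleR_right_diff_distrib)
      (simp add: scaleR_2 algebra_simps)
  then show ?thesis by simp
qed

lemma diss_eq_sum_comm:
  assumes "cadj X = X"
  shows "diss H L I X = (\<Sum>k\<in>I. comm (cadj (L k)) X ** comm X (L k))"
proof -
  have "diss H L I X = (mat \<i> ** comm H (X ** X) - (mat \<i> ** comm H X) ** X - X ** (mat \<i> ** comm H X))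
     + (\<Sum>k\<in>I. genL (L k) (X ** X) - genL (L k) X ** X - X ** genL (L k) X)"
    unfolding diss_def gen_def assms
    by (simp add: matrix_add_rdistrib matrix_add_ldistrib matrix_sum_rdistrib matrix_sum_ldistrib
        sum_subtractf sum.distrib algebra_simps)
  moreover have "mat \<i> ** comm H (X ** X) - (mat \<i> ** comm H X) ** X - X ** (mat \<i> ** comm H X) = 0"
    by (simp add: comm_def matrix_algebra_simps mat_mult_commute algebra_simps)
  ultimately show ?thesis by (simp add: genL_square_defect)
qed

lemma diss_add:
  assumes hA: "cadj A = A" and hB: "cadj B = B"
  shows "diss H L I (A + B) = diss H L I A + diss H L I B
     + 2 *\<^sub>R (\<Sum>k\<in>I. mRe (comm (cadj (L k)) A ** comm B (L k)))"
proof -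
  have per_coupling: "comm (cadj M) (A + B) ** comm (A + B) M
      = comm (cadj M) A ** comm A M + comm (cadj M) B ** comm B M
        + 2 *\<^sub>R mRe (comm (cadj M) A ** comm B M)" for M
  proof -
    have "cadj (comm B M) = comm (cadj M) B" "cadj (comm (cadj M) A) = comm A M"
      by (simp_all add: comm_def cadj_diff cadj_mult hA hB)
    then have "2 *\<^sub>R mRe (comm (cadj M) A ** comm B M)
        = comm (cadj M) A ** comm B M + comm (cadj M) B ** comm A M"
      by (simp add: mRe_def cadj_mult)
    then show ?thesis
      by (simp add: comm_add_right comm_add_left matrix_add_ldistrib matrix_add_rdistrib algebra_simps)
  qed
  have "cadj (A + B) = A + B" by (simp add: cadj_add hA hB)
  then show ?thesis
    by (simp add: diss_eq_sum_comm hA hB per_coupling sum.distrib scaleR_sum_right)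
qed

lemma psd_comm_cadj_comm: "cadj X = X \<Longrightarrow> psd (comm (cadj L) X ** comm X L)"
proof -
  assume "cadj X = X"
  then have "comm (cadj L) X = cadj (comm X L)" by (simp add: comm_def cadj_diff cadj_mult)
  then show ?thesis by (simp add: psd_cadj_mult_self)
qed

definition lindblad_term :: "'n::finite cmat \<Rightarrow> 'n cmat \<Rightarrow> 'n cmat" where
  "lindblad_term L \<rho> = L ** \<rho> ** cadj L - (1/2::real) *\<^sub>R (cadj L ** L ** \<rho>)
     - (1/2::real) *\<^sub>R (\<rho> ** cadj L ** L)"

lemma lindblad_eq_sum_terms:
  "lindblad H L I \<rho> = - (mat \<i> ** comm H \<rho>) + (\<Sum>k\<in>I. lindblad_term (L k) \<rho>)"
  by (simp add: lindblad_def lindblad_term_def)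

lemma linear_lindblad_term: "linear (lindblad_term M :: 'n::finite cmat \<Rightarrow> 'n cmat)"
  by (rule linearI) (simp_all add: lindblad_term_def matrix_algebra_simps algebra_simps)

lemma linear_lindblad: "linear (lindblad H L I :: 'n::finite cmat \<Rightarrow> 'n cmat)"
  by (rule linearI)
    (simp_all add: lindblad_eq_sum_terms linear_add[OF linear_lindblad_term]
      linear_scale[OF linear_lindblad_term] comm_add_right comm_scaleR_right matrix_add_ldistrib
      matrix_scaleR_right sum.distrib scaleR_sum_right algebra_simps)

lemma bounded_linear_lindblad: "bounded_linear (lindblad H L I :: 'n::finite cmat \<Rightarrow> 'n cmat)"
  using linear_lindblad linear_conv_bounded_linear by blast

lemma lindblad_diff: "lindblad H L I (X - Y) = lindblad H L I X - lindblad H L I (Y::'n::finite cmat)"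
  using linear_lindblad by (rule linear_diff)

lemma lindblad_scaleR: "lindblad H L I (c *\<^sub>R X) = c *\<^sub>R lindblad H L I (X::'n::finite cmat)"
  using linear_lindblad by (rule linear_scale)

lemma lindblad_cadj:
  assumes "hermitian H"
  shows "cadj (lindblad H L I X) = lindblad H L I (cadj (X::'n::finite cmat))"
proof -
  have "cadj (mat \<i> ** Y) = - (mat \<i> ** cadj Y)" for Y :: "'n cmat"
    by (simp add: cadj_mult cadj_mat mat_mult_left mat_mult_right vec_eq_iff)
  moreover have "cadj (comm H X) = - comm H (cadj X)"
    using assms by (simp add: hermitian_def comm_def cadj_diff cadj_mult)
  ultimately have hamiltonian: "cadj (mat \<i> ** comm H X) = mat \<i> ** comm H (cadj X)"
    by (simp add: matrix_uminus_right)
  have "cadj (lindblad_term M X) = lindblad_term M (cadj X)" for M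
  proof -
    have "cadj (lindblad_term M X) = M ** cadj X ** cadj M - (1/2::real) *\<^sub>R (cadj X ** cadj M ** M)
        - (1/2::real) *\<^sub>R (cadj M ** M ** cadj X)"
      by (simp add: lindblad_term_def cadj_diff cadj_scaleR cadj_mult matrix_mul_assoc)
    then show ?thesis by (simp add: lindblad_term_def diff_diff_eq add.commute)
  qed
  then show ?thesis
    by (simp add: lindblad_eq_sum_terms cadj_add cadj_diff cadj_uminus cadj_sum hamiltonian)
qed

lemma bounded_linear_cadj: "bounded_linear (cadj :: 'n::finite cmat \<Rightarrow> 'n cmat)"
proof -
  have "linear (cadj :: 'n::finite cmat \<Rightarrow> 'n cmat)"
    by (rule linearI) (simp_all add: cadj_add cadj_scaleR)
  then show ?thesis using linear_conv_bounded_linear by blast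
qed

lemma bounded_linear_trace_mult: "bounded_linear (\<lambda>A. trace (X ** (A::'n::finite cmat)))"
proof -
  have "linear (\<lambda>A. trace (X ** (A::'n::finite cmat)))"
    by (rule linearI) (simp_all add: matrix_add_ldistrib trace_add matrix_scaleR_right trace_scaleR)
  then show ?thesis using linear_conv_bounded_linear by blast
qed

lemma bounded_linear_Re_qform: "bounded_linear (\<lambda>A::'n::finite cmat. Re (qform A v))"
proof -
  have "linear (\<lambda>A::'n cmat. Re (qform A v))"
    by (rule linearI) (simp_all add: qform_add qform_scaleR)
  then show ?thesis using linear_conv_bounded_linear by blast
qed

section \<open>Real-analytic tools\<close>

lemma increment_le_of_deriv_le:
  fixes f :: "real \<Rightarrow> real"
  assumes deriv: "\<And>t. 0 \<le> t \<Longrightarrow> (f has_real_derivative f' t) (at t within {0..})"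
    and bound: "\<And>t. 0 \<le> t \<Longrightarrow> f' t \<le> B" and "0 \<le> s" "s \<le> t"
  shows "f t \<le> f s + B * (t - s)"
proof -
  have "\<exists>x\<in>{s..t}. f t - f s = (\<lambda>h. f' x * h) (t - s)"
  proof (rule mvt_very_simple[OF \<open>s \<le> t\<close>])
    fix x assume "s \<le> x" "x \<le> t"
    then have "(f has_real_derivative f' x) (at x within {s..t})"
      using \<open>0 \<le> s\<close> by (intro DERIV_subset[OF deriv]) auto
    then show "(f has_derivative (\<lambda>h. f' x * h)) (at x within {s..t})"
      by (simp add: has_field_derivative_def)
  qed
  then obtain x where "x \<in> {s..t}" "f t - f s = f' x * (t - s)" by auto
  moreover have "f' x * (t - s) \<le> B * (t - s)"
    using bound[of x] \<open>x \<in> {s..t}\<close> \<open>0 \<le> s\<close> by (intro mult_right_mono) auto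
  ultimately show ?thesis by simp
qed

lemma deriv_le_neg_imp_unbounded_below:
  fixes h :: "real \<Rightarrow> real"
  assumes deriv: "\<And>t. 0 \<le> t \<Longrightarrow> (h has_real_derivative h' t) (at t within {0..})"
    and slope: "\<And>t. 0 \<le> t \<Longrightarrow> h' t \<le> - \<delta>" and "0 < \<delta>"
  shows "\<exists>t\<ge>0. h t < B"
proof -
  define T where "T = (\<bar>h 0\<bar> + \<bar>B\<bar> + 1) / \<delta>"
  have "0 \<le> T" using \<open>0 < \<delta>\<close> by (simp add: T_def)
  have "h T \<le> h 0 + (- \<delta>) * (T - 0)"
    using \<open>0 \<le> T\<close> by (intro increment_le_of_deriv_le[OF deriv slope]) auto
  also have "\<dots> = h 0 - (\<bar>h 0\<bar> + \<bar>B\<bar> + 1)" using \<open>0 < \<delta>\<close> by (simp add: T_def)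
  also have "\<dots> < B" by linarith
  finally show ?thesis using \<open>0 \<le> T\<close> by blast
qed

lemma tendsto_zero_if_antimono_arbitrarily_small:
  fixes f :: "real \<Rightarrow> real"
  assumes nonneg: "\<And>t. 0 \<le> t \<Longrightarrow> 0 \<le> f t"
    and antimono: "\<And>s t. 0 \<le> s \<Longrightarrow> s \<le> t \<Longrightarrow> f t \<le> f s"
    and small: "\<And>\<epsilon>. 0 < \<epsilon> \<Longrightarrow> \<exists>t\<ge>0. f t < \<epsilon>"
  shows "(f \<longlongrightarrow> 0) at_top"
proof (rule order_tendstoI)
  fix a :: real assume "a < 0"
  show "eventually (\<lambda>t. a < f t) at_top"
    using eventually_ge_at_top[of 0] by (rule eventually_mono) (use nonneg \<open>a < 0\<close> in force)
next
  fix a :: real assume "0 < a"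
  then obtain t0 where t0: "0 \<le> t0" "f t0 < a" using small by blast
  show "eventually (\<lambda>t. f t < a) at_top"
    using eventually_ge_at_top[of t0] by (rule eventually_mono) (use antimono t0 in force)
qed

lemma linear_ode_zero_unique:
  fixes D :: "real \<Rightarrow> 'a::real_inner" and F :: "'a \<Rightarrow> 'a"
  assumes "bounded_linear F"
    and deriv: "\<And>t. 0 \<le> t \<Longrightarrow> (D has_vector_derivative F (D t)) (at t within {0..})"
    and "D 0 = 0" and "0 \<le> t"
  shows "D t = 0"
proof -
  obtain K where "K > 0" and K: "\<And>x. norm (F x) \<le> norm x * K"
    using bounded_linear.pos_bounded[OF assms(1)] by blast
  \<comment> \<open>\<open>exp (-2Kt) |D t|\<^sup>2\<close> is nonincreasing and starts at 0\<close>
  define \<phi> where "\<phi> s = exp (- (2 * K) * s) * (D s \<bullet> D s)" for s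
  define \<phi>' where "\<phi>' s = - (2 * K) * exp (- (2 * K) * s) * (D s \<bullet> D s)
      + exp (- (2 * K) * s) * (2 * (D s \<bullet> F (D s)))" for s
  have "(\<phi> has_real_derivative \<phi>' s) (at s within {0..})" if "0 \<le> s" for s
  proof -
    have "((\<lambda>x. D x \<bullet> D x) has_real_derivative 2 * (D s \<bullet> F (D s))) (at s within {0..})"
      using bounded_bilinear.has_vector_derivative[OF bounded_bilinear_inner deriv[OF that] deriv[OF that]]
      by (simp add: has_real_derivative_iff_has_vector_derivative inner_commute[of "F (D s)"])
    then show ?thesis unfolding \<phi>_def \<phi>'_def
      by (auto intro!: derivative_eq_intros simp: algebra_simps)
  qed
  moreover have "\<phi>' s \<le> 0" for s
  proof -
    have "D s \<bullet> F (D s) \<le> norm (D s) * norm (F (D s))" by (rule norm_cauchy_schwarz)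
    also have "\<dots> \<le> norm (D s) * (norm (D s) * K)" by (rule mult_left_mono[OF K]) simp
    also have "\<dots> = K * (D s \<bullet> D s)" by (simp add: norm_eq_sqrt_inner)
    finally show ?thesis by (simp add: \<phi>'_def algebra_simps mult_left_mono)
  qed
  ultimately have "\<phi> t \<le> \<phi> 0 + 0 * (t - 0)"
    using \<open>0 \<le> t\<close> by (intro increment_le_of_deriv_le) auto
  then have "D t \<bullet> D t \<le> 0" by (simp add: \<phi>_def \<open>D 0 = 0\<close> mult_le_0_iff)
  then show ?thesis by (metis inner_eq_zero_iff inner_ge_zero order_antisym)
qed

lemma first_time_nonpositive:
  fixes q :: "real \<Rightarrow> 'a::metric_space \<Rightarrow> real"
  assumes "compact S" and cont: "continuous_on ({0..} \<times> S) (\<lambda>p. q (fst p) (snd p))"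
    and start: "\<And>v. v \<in> S \<Longrightarrow> 0 < q 0 v"
    and "0 \<le> t0" "v0 \<in> S" "q t0 v0 \<le> 0"
  obtains ts u where "0 < ts" "u \<in> S" "q ts u = 0" "\<And>v. v \<in> S \<Longrightarrow> 0 \<le> q ts v"
    "\<And>s v. 0 \<le> s \<Longrightarrow> s < ts \<Longrightarrow> v \<in> S \<Longrightarrow> 0 < q s v"
proof -
  define A where "A = {0..t0} \<times> S"
  define Z where "Z = A \<inter> (\<lambda>p. q (fst p) (snd p)) -` {..0}"
  have "compact A" using \<open>compact S\<close> by (simp add: A_def compact_Times)
  moreover have "continuous_on A (\<lambda>p. q (fst p) (snd p))"
    by (rule continuous_on_subset[OF cont]) (auto simp: A_def)
  ultimately have "compact Z"
    unfolding Z_def using compact_Int_closed continuous_closed_preimage[OF _ compact_imp_closed]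
    by (metis Int_absorb1 Int_lower1 closed_atMost)
  then have "compact (fst ` Z)" by (intro compact_continuous_image continuous_intros)
  moreover have "(t0, v0) \<in> Z" using assms(4-6) by (simp add: Z_def A_def)
  ultimately obtain ts where "ts \<in> fst ` Z" and least: "\<And>t. t \<in> fst ` Z \<Longrightarrow> ts \<le> t"
    using compact_attains_inf[of "fst ` Z"] by blast
  then obtain u where "(ts, u) \<in> Z" by force
  then have "0 \<le> ts" "ts \<le> t0" "u \<in> S" "q ts u \<le> 0" by (auto simp: Z_def A_def)
  have before: "0 < q s v" if "0 \<le> s" "s < ts" "v \<in> S" for s v
  proof (rule ccontr)
    assume "\<not> 0 < q s v"
    then have "s \<in> fst ` Z" using that \<open>ts \<le> t0\<close> by (force simp: Z_def A_def)
    then show False using least that(2) by force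
  qed
  have "0 < ts" using start[OF \<open>u \<in> S\<close>] \<open>q ts u \<le> 0\<close> \<open>0 \<le> ts\<close> by (cases "ts = 0") auto
  have at_ts: "0 \<le> q ts v" if "v \<in> S" for v
  proof (rule ccontr)
    assume "\<not> 0 \<le> q ts v"
    have "continuous_on {0..} (\<lambda>s::real. (s, v))" by (intro continuous_intros)
    from continuous_on_compose2[OF cont this] that have "continuous_on {0..} (\<lambda>s. q s v)" by auto
    then have "((\<lambda>s. q s v) \<longlongrightarrow> q ts v) (at ts within {0..})"
      using \<open>0 \<le> ts\<close> by (simp add: continuous_on_def)
    then have "eventually (\<lambda>s. q s v < 0) (at ts within {0..})"
      using \<open>\<not> 0 \<le> q ts v\<close> by (intro order_tendstoD) auto
    then obtain d where "d > 0" and d: "\<And>s. s \<in> {0..} \<Longrightarrow> s \<noteq> ts \<Longrightarrow> dist s ts < d \<Longrightarrow> q s v < 0"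
      by (auto simp: eventually_at)
    define s where "s = ts - min d ts / 2"
    have "q s v < 0" using \<open>d > 0\<close> \<open>0 < ts\<close> by (intro d) (auto simp: s_def dist_real_def)
    moreover have "0 < q s v" using \<open>d > 0\<close> \<open>0 < ts\<close> that by (intro before) (auto simp: s_def)
    ultimately show False by simp
  qed
  show ?thesis
    using that[OF \<open>0 < ts\<close> \<open>u \<in> S\<close> _ at_ts before] at_ts[OF \<open>u \<in> S\<close>] \<open>q ts u \<le> 0\<close> by simp
qed

section \<open>Solutions of the master equation\<close>

definition lindblad_solution ::
    "'n::finite cmat \<Rightarrow> (nat \<Rightarrow> 'n cmat) \<Rightarrow> nat set \<Rightarrow> (real \<Rightarrow> 'n cmat) \<Rightarrow> bool" where
  "lindblad_solution H L I \<rho> \<longleftrightarrow> density (\<rho> 0) \<and>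
     (\<forall>t\<ge>0. (\<rho> has_vector_derivative lindblad H L I (\<rho> t)) (at t within {0..}))"

lemma ags_stable_iff_solutions:
  "ags_stable H L I X \<longleftrightarrow>
     (\<forall>\<rho>. lindblad_solution H L I \<rho> \<longrightarrow>
        ((\<lambda>t. trace (X ** \<rho> t)) \<longlongrightarrow> complex_of_real (min_eig X)) at_top)"
  by (simp add: ags_stable_def lindblad_solution_def)

context
  fixes H :: "'n::finite cmat" and L I and \<rho> :: "real \<Rightarrow> 'n cmat"
  assumes solution: "lindblad_solution H L I \<rho>"
begin

lemma lindblad_solution_deriv:
  "0 \<le> t \<Longrightarrow> (\<rho> has_vector_derivative lindblad H L I (\<rho> t)) (at t within {0..})"
  using solution by (simp add: lindblad_solution_def)

lemma lindblad_solution_continuous: "continuous_on {0..} \<rho>"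
  unfolding continuous_on_eq_continuous_within
  using lindblad_solution_deriv has_vector_derivative_continuous by fastforce

lemma lindblad_solution_hermitian:
  assumes "hermitian H" "0 \<le> t"
  shows "hermitian (\<rho> t)"
proof -
  define D where "D s = \<rho> s - cadj (\<rho> s)" for s
  have "D t = 0"
  proof (rule linear_ode_zero_unique[OF bounded_linear_lindblad _ _ \<open>0 \<le> t\<close>])
    fix s :: real assume "0 \<le> s"
    note deriv = lindblad_solution_deriv[OF this]
    show "(D has_vector_derivative lindblad H L I (D s)) (at s within {0..})"
      using has_vector_derivative_diff[OF deriv
          bounded_linear.has_vector_derivative[OF bounded_linear_cadj deriv]]
      by (simp add: D_def[abs_def] lindblad_diff lindblad_cadj[OF \<open>hermitian H\<close>])
  next
    show "D 0 = 0" using solution by (simp add: D_def lindblad_solution_def density_def psd_def hermitian_def)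
  qed
  then show ?thesis by (simp add: D_def hermitian_def)
qed

lemma trace_mult_solution_deriv:
  assumes "0 \<le> t"
  shows "((\<lambda>s. trace (X ** \<rho> s)) has_vector_derivative trace (gen H L I X ** \<rho> t)) (at t within {0..})"
  using bounded_linear.has_vector_derivative[OF bounded_linear_trace_mult lindblad_solution_deriv[OF assms]]
  by (simp add: trace_mult_lindblad)

lemma Re_trace_mult_solution_deriv:
  assumes "0 \<le> t"
  shows "((\<lambda>s. Re (trace (X ** \<rho> s))) has_real_derivative Re (trace (gen H L I X ** \<rho> t)))
    (at t within {0..})"
  using bounded_linear.has_vector_derivative[OF bounded_linear_Re trace_mult_solution_deriv[OF assms]]
  by (simp add: has_real_derivative_iff_has_vector_derivative)

lemma lindblad_solution_trace:
  assumes "0 \<le> t"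
  shows "trace (\<rho> t) = 1"
proof -
  have "gen H L I (mat 1) = 0" using gen_const[of H L I 1] by (simp add: const_def)
  then have "((\<lambda>s. trace (mat 1 ** \<rho> s)) has_derivative (\<lambda>h. 0)) (at s within {0..})" if "0 \<le> s" for s
    using trace_mult_solution_deriv[OF that, of "mat 1"] by (simp add: has_vector_derivative_def)
  then have "trace (mat 1 ** \<rho> t) = trace (mat 1 ** \<rho> 0)"
    using assms by (intro has_derivative_zero_unique[of "{0..}"]) auto
  then show ?thesis using solution by (simp add: lindblad_solution_def density_def)
qed

end

lemma qform_lindblad_term_kernel:
  assumes "hermitian \<sigma>" and "\<sigma> *v u = 0"
  shows "qform (lindblad_term M \<sigma>) u = qform \<sigma> (cadj M *v u)"
proof -
  have "lindblad_term M \<sigma> *v u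
      = M *v (\<sigma> *v (cadj M *v u)) - (1/2::real) *\<^sub>R (\<sigma> *v (cadj M *v (M *v u)))"
    using assms(2)
    by (simp add: lindblad_term_def matrix_vector_mult_diff_rdistrib matrix_vector_scaleR_left
        flip: matrix_vector_mul_assoc)
  moreover have "cinner u (\<sigma> *v (cadj M *v (M *v u))) = 0"
    using assms by (simp add: hermitian_cinner)
  ultimately show ?thesis
    by (simp add: qform_def cinner_diff_right cinner_scaleR_right cinner_matrix_vector)
qed

text \<open>The Lindbladian is conditionally positive: at a kernel vector of a positive operator it
  points into the positive cone. This is what makes the flow preserve positivity.\<close>
lemma Re_qform_lindblad_kernel_nonneg:
  assumes "psd \<sigma>" and kernel: "\<sigma> *v u = 0"
  shows "0 \<le> Re (qform (lindblad H L I \<sigma>) u)"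
proof -
  have herm: "hermitian \<sigma>" using assms(1) by (rule psd_imp_hermitian)
  have "qform (mat \<i> ** comm H \<sigma>) u = \<i> * (cinner u (H *v (\<sigma> *v u)) - cinner u (\<sigma> *v (H *v u)))"
    by (simp add: qform_def comm_def matrix_vector_mult_diff_rdistrib mat_matrix_vector
        cinner_scale_right cinner_diff_right right_diff_distrib flip: mat_mult_left matrix_vector_mul_assoc)
  also have "\<dots> = 0" using kernel by (simp add: hermitian_cinner[OF herm])
  finally have "qform (lindblad H L I \<sigma>) u = (\<Sum>k\<in>I. qform \<sigma> (cadj (L k) *v u))"
    by (simp add: lindblad_eq_sum_terms qform_add qform_diff qform_sum qform_uminus
        qform_lindblad_term_kernel[OF herm kernel])
  then show ?thesis using assms(1) by (simp add: psd_iff_qform sum_nonneg)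
qed

lemma Re_qform_solution_deriv:
  assumes "lindblad_solution H L I \<rho>" "0 \<le> t"
  shows "((\<lambda>s. Re (qform (\<rho> s) v)) has_real_derivative Re (qform (lindblad H L I (\<rho> t)) v))
    (at t within {0..})"
  using bounded_linear.has_vector_derivative[OF bounded_linear_Re_qform lindblad_solution_deriv[OF assms]]
  by (simp add: has_real_derivative_iff_has_vector_derivative)

lemma deriv_nonpos_at_first_zero:
  fixes f :: "real \<Rightarrow> real"
  assumes deriv: "(f has_real_derivative D) (at t within {0..})" and "0 < t" "f t = 0"
    and before: "\<And>s. 0 \<le> s \<Longrightarrow> s < t \<Longrightarrow> 0 < f s"
  shows "D \<le> 0"
proof (rule ccontr)
  assume "\<not> D \<le> 0"
  have "(f has_real_derivative D) (at t within {0<..})" by (rule DERIV_subset[OF deriv]) auto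
  then have "(f has_real_derivative D) (at t)" using at_within_open[of t "{0<..}"] \<open>0 < t\<close> by simp
  from DERIV_pos_inc_left[OF this] \<open>\<not> D \<le> 0\<close> obtain d
    where "d > 0" and d: "\<And>h. 0 < h \<Longrightarrow> h < d \<Longrightarrow> f (t - h) < f t"
    by auto
  define h where "h = min d t / 2"
  have "f (t - h) < 0" using d[of h] \<open>d > 0\<close> \<open>0 < t\<close> \<open>f t = 0\<close> by (simp add: h_def)
  moreover have "0 < f (t - h)" using \<open>d > 0\<close> \<open>0 < t\<close> by (intro before) (auto simp: h_def)
  ultimately show False by simp
qed

lemma Re_qform_lindblad_shift_lower_bound:
  assumes "psd \<sigma>" "\<sigma> *v u = 0" "norm u = 1" "0 \<le> c"
  shows "- c * (\<Sum>i\<in>UNIV. \<Sum>j\<in>UNIV. cmod (lindblad H L I (mat 1) $ i $ j))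
    \<le> Re (qform (lindblad H L I (\<sigma> - c *\<^sub>R mat 1)) u)"
proof -
  have "Re (qform (lindblad H L I (mat 1)) u) \<le> (\<Sum>i\<in>UNIV. \<Sum>j\<in>UNIV. cmod (lindblad H L I (mat 1) $ i $ j))"
    using cmod_qform_le[of "lindblad H L I (mat 1)" u] abs_Re_le_cmod[of "qform (lindblad H L I (mat 1)) u"]
      \<open>norm u = 1\<close> by simp
  then show ?thesis
    using Re_qform_lindblad_kernel_nonneg[OF assms(1,2), of H L I] mult_left_mono[OF _ \<open>0 \<le> c\<close>]
    by (simp add: lindblad_diff lindblad_scaleR qform_diff qform_scaleR) (smt (verit))
qed

text \<open>Positivity is shown for \<open>\<rho> t + \<epsilon> e\<^bsup>\<beta> t\<^esup>\<close>: at the first time it touches the boundary of the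
  cone, conditional positivity of the Lindbladian plus the growth \<open>\<beta>\<close> of the perturbation
  (which dominates the Lindbladian of the identity) make it strictly increase, a contradiction.\<close>
lemma lindblad_solution_perturbed_pos:
  fixes \<rho> :: "real \<Rightarrow> 'n::finite cmat"
  assumes "hermitian H" and solution: "lindblad_solution H L I \<rho>" and "0 < \<epsilon>"
    and "0 \<le> t0" "norm v0 = 1"
  defines "\<beta> \<equiv> (\<Sum>i\<in>UNIV. \<Sum>j\<in>UNIV. cmod (lindblad H L I (mat 1) $ i $ j)) + 1"
  shows "0 < Re (qform (\<rho> t0) v0) + \<epsilon> * exp (\<beta> * t0)"
proof (rule ccontr)
  let ?S = "sphere (0::complex^'n) 1"
  define q where "q s v = Re (qform (\<rho> s) v) + \<epsilon> * exp (\<beta> * s)" for s v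
  assume "\<not> ?thesis"
  then have "q t0 v0 \<le> 0" by (simp add: q_def)
  moreover have "continuous_on ({0..} \<times> ?S) (\<lambda>p. q (fst p) (snd p))"
  proof -
    have "continuous_on ({0..} \<times> ?S) (\<lambda>p. \<rho> (fst p))"
      by (rule continuous_on_compose2[OF lindblad_solution_continuous[OF solution]])
        (auto intro: continuous_intros)
    then show ?thesis unfolding q_def qform_def cinner_def matrix_vector_mult_def
      by (intro continuous_intros)
  qed
  moreover have "0 < q 0 v" for v
    using solution \<open>0 < \<epsilon>\<close> by (simp add: q_def lindblad_solution_def density_def psd_iff_qform add_nonneg_pos)
  ultimately obtain ts u where "0 < ts" "norm u = 1" "q ts u = 0"
    and at_ts: "\<And>v. norm v = 1 \<Longrightarrow> 0 \<le> q ts v"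
    and before: "\<And>s v. 0 \<le> s \<Longrightarrow> s < ts \<Longrightarrow> norm v = 1 \<Longrightarrow> 0 < q s v"
    using first_time_nonpositive[of ?S q t0 v0] \<open>0 \<le> t0\<close> \<open>norm v0 = 1\<close> by auto
  define c where "c = \<epsilon> * exp (\<beta> * ts)"
  define \<sigma> where "\<sigma> = \<rho> ts + const c"
  have q_ts: "q ts v = Re (qform \<sigma> v)" if "norm v = 1" for v
    using that by (simp add: q_def \<sigma>_def c_def qform_add qform_const)
  have "hermitian \<sigma>"
    unfolding \<sigma>_def using \<open>0 < ts\<close>
    by (intro hermitian_add hermitian_const lindblad_solution_hermitian[OF solution \<open>hermitian H\<close>]) simp
  then have "psd \<sigma>" using at_ts q_ts by (intro psd_if_unit_qform_nonneg) auto
  moreover have "\<sigma> *v u = 0"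
    using \<open>q ts u = 0\<close> q_ts \<open>norm u = 1\<close> by (intro psd_qform_zero_imp_kernel[OF \<open>psd \<sigma>\<close>]) simp
  moreover have "\<rho> ts = \<sigma> - c *\<^sub>R mat 1"
    by (simp add: \<sigma>_def const_def vec_eq_iff mat_def del: scaleR_conv_of_real) (simp add: scaleR_conv_of_real)
  ultimately have "- c * (\<beta> - 1) \<le> Re (qform (lindblad H L I (\<rho> ts)) u)"
    using Re_qform_lindblad_shift_lower_bound[of \<sigma> u c H L I] \<open>norm u = 1\<close> \<open>0 < \<epsilon>\<close>
    by (simp add: c_def \<beta>_def)
  then have slope: "0 < Re (qform (lindblad H L I (\<rho> ts)) u) + \<epsilon> * (\<beta> * exp (\<beta> * ts))"
    using mult_pos_pos[OF \<open>0 < \<epsilon>\<close> exp_gt_zero[of "\<beta> * ts"]] by (simp add: c_def algebra_simps)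
  have "((\<lambda>s. Re (qform (\<rho> s) u)) has_real_derivative Re (qform (lindblad H L I (\<rho> ts)) u))
      (at ts within {0..})"
    using Re_qform_solution_deriv[OF solution] \<open>0 < ts\<close> by simp
  moreover have "((\<lambda>s. \<epsilon> * exp (\<beta> * s)) has_real_derivative \<epsilon> * (\<beta> * exp (\<beta> * ts)))
      (at ts within {0..})"
    by (auto intro!: derivative_eq_intros)
  ultimately have "((\<lambda>s. q s u) has_real_derivative
      Re (qform (lindblad H L I (\<rho> ts)) u) + \<epsilon> * (\<beta> * exp (\<beta> * ts))) (at ts within {0..})"
    unfolding q_def by (rule DERIV_add)
  then have "Re (qform (lindblad H L I (\<rho> ts)) u) + \<epsilon> * (\<beta> * exp (\<beta> * ts)) \<le> 0"
    by (rule deriv_nonpos_at_first_zero) (use \<open>0 < ts\<close> \<open>q ts u = 0\<close> before \<open>norm u = 1\<close> in auto)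
  with slope show False by simp
qed

lemma lindblad_solution_psd:
  fixes \<rho> :: "real \<Rightarrow> 'n::finite cmat"
  assumes "hermitian H" "lindblad_solution H L I \<rho>" "0 \<le> t"
  shows "psd (\<rho> t)"
proof (rule psd_if_unit_qform_nonneg[OF lindblad_solution_hermitian[OF assms(2,1,3)]])
  fix v :: "complex^'n" assume "norm v = 1"
  define \<beta> where "\<beta> = (\<Sum>i\<in>UNIV. \<Sum>j\<in>UNIV. cmod (lindblad H L I (mat 1) $ i $ j)) + 1"
  show "0 \<le> Re (qform (\<rho> t) v)"
  proof (rule ccontr)
    assume "\<not> 0 \<le> Re (qform (\<rho> t) v)"
    then have "0 < - Re (qform (\<rho> t) v) / exp (\<beta> * t)" by (simp add: divide_neg_pos)
    from lindblad_solution_perturbed_pos[OF assms(1,2) this assms(3) \<open>norm v = 1\<close>]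
    show False by (simp add: \<beta>_def)
  qed
qed

section \<open>Lyapunov criteria\<close>

lemma Re_trace_mult_solution_nonneg:
  assumes "hermitian H" "lindblad_solution H L I \<rho>" "psd V" "0 \<le> t"
  shows "0 \<le> Re (trace (V ** \<rho> t))"
  using trace_mult_psd_nonneg[OF assms(3) lindblad_solution_psd[OF assms(1,2,4)]] .

lemma lindblad_solution_exp_decay_tendsto_zero:
  assumes "hermitian H" and solution: "lindblad_solution H L I \<rho>" and "psd V" "0 < c"
    and decay: "op_le (gen H L I V) ((-c) *\<^sub>R V)"
  shows "((\<lambda>t. Re (trace (V ** \<rho> t))) \<longlongrightarrow> 0) at_top"
proof -
  define f where "f t = Re (trace (V ** \<rho> t))" for t
  define f' where "f' t = Re (trace (gen H L I V ** \<rho> t))" for t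
  have deriv: "(f has_real_derivative f' t) (at t within {0..})" if "0 \<le> t" for t
    unfolding f_def f'_def using Re_trace_mult_solution_deriv[OF solution that] .
  have nonneg: "0 \<le> f t" if "0 \<le> t" for t
    unfolding f_def using Re_trace_mult_solution_nonneg assms that by blast
  have slope: "f' t \<le> - c * f t" if "0 \<le> t" for t
    using trace_mult_mono[OF lindblad_solution_psd[OF assms(1) solution that] decay]
    by (simp add: f_def f'_def matrix_uminus_left trace_uminus matrix_scaleR_left trace_scaleR)
  show ?thesis unfolding f_def[symmetric]
  proof (rule tendsto_zero_if_antimono_arbitrarily_small[OF nonneg])
    fix s t :: real assume "0 \<le> s" "s \<le> t"
    moreover have "f' t \<le> 0" if "0 \<le> t" for t
    proof -
      have "0 \<le> c * f t" using nonneg[OF that] \<open>0 < c\<close> by simp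
      then show ?thesis using slope[OF that] by simp
    qed
    ultimately show "f t \<le> f s" using increment_le_of_deriv_le[OF deriv, of 0 s t] by simp
  next
    fix \<epsilon> :: real assume "0 < \<epsilon>"
    show "\<exists>t\<ge>0. f t < \<epsilon>"
    proof (rule ccontr)
      assume "\<not> ?thesis"
      then have "f' t \<le> - (c * \<epsilon>)" if "0 \<le> t" for t
        using slope[OF that] mult_left_mono[of \<epsilon> "f t" c] \<open>0 < c\<close> that by fastforce
      then obtain t where "0 \<le> t" "f t < 0"
        using deriv_le_neg_imp_unbounded_below[OF deriv, of "c * \<epsilon>" 0] \<open>0 < c\<close> \<open>0 < \<epsilon>\<close> by auto
      then show False using nonneg by fastforce
    qed
  qed
qed

text \<open>Operator AM-GM: \<open>PV + VP \<le> s VPV + P/s\<close> for \<open>P \<ge> 0\<close>, from positivity of \<open>(sV - 1) P (sV - 1)\<close>.\<close>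
lemma Re_trace_anticommutator_le:
  fixes V P \<rho> :: "'n::finite cmat"
  assumes "psd P" and hV: "cadj V = V" and "psd \<rho>" and "0 < s"
  shows "Re (trace ((P ** V + V ** P) ** \<rho>))
    \<le> s * Re (trace ((V ** P ** V) ** \<rho>)) + Re (trace (P ** \<rho>)) / s"
proof -
  have adj: "cadj (s *\<^sub>R V - mat 1) = s *\<^sub>R V - (mat 1 :: 'n cmat)"
    by (simp add: cadj_diff cadj_scaleR hV cadj_mat)
  have "(s *\<^sub>R V - mat 1) ** P ** cadj (s *\<^sub>R V - mat 1)
      = (s * s) *\<^sub>R (V ** P ** V) - s *\<^sub>R (V ** P) - s *\<^sub>R (P ** V) + P"
    unfolding adj by (simp add: matrix_algebra_simps algebra_simps)
  then have "0 \<le> s * s * Re (trace ((V ** P ** V) ** \<rho>)) - s * Re (trace ((V ** P) ** \<rho>))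
      - s * Re (trace ((P ** V) ** \<rho>)) + Re (trace (P ** \<rho>))"
    using trace_mult_psd_nonneg[OF psd_sandwich[OF \<open>psd P\<close>, of "s *\<^sub>R V - mat 1"] \<open>psd \<rho>\<close>]
    by (simp add: matrix_add_rdistrib matrix_diff_rdistrib matrix_scaleR_left trace_add trace_sub
        trace_scaleR)
  then have "s * (Re (trace ((V ** P) ** \<rho>)) + Re (trace ((P ** V) ** \<rho>)))
      \<le> s * (s * Re (trace ((V ** P ** V) ** \<rho>)) + Re (trace (P ** \<rho>)) / s)"
    using \<open>0 < s\<close> by (simp add: algebra_simps)
  then show ?thesis
    using \<open>0 < s\<close> by (simp add: mult_le_cancel_left_pos matrix_add_rdistrib trace_add)
qed

text \<open>Used with \<open>f = tr (V \<rho>\<^sub>t)\<close> and \<open>g = tr (V\<^sup>2 \<rho>\<^sub>t)\<close>: if \<open>f\<close> stayed above \<open>\<epsilon>\<close>, then for small \<open>s\<close>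
  the bounded-below quantity \<open>f / s - g\<close> would decrease at a uniform rate.\<close>
lemma tendsto_zero_if_dissipation_dominates:
  fixes f p g g' :: "real \<Rightarrow> real"
  assumes df: "\<And>t. 0 \<le> t \<Longrightarrow> (f has_real_derivative - p t) (at t within {0..})"
    and dg: "\<And>t. 0 \<le> t \<Longrightarrow> (g has_real_derivative g' t) (at t within {0..})"
    and f_nonneg: "\<And>t. 0 \<le> t \<Longrightarrow> 0 \<le> f t" and p_nonneg: "\<And>t. 0 \<le> t \<Longrightarrow> 0 \<le> p t"
    and g_bound: "\<And>t. 0 \<le> t \<Longrightarrow> g t \<le> B"
    and g'_lower: "\<And>t s. 0 \<le> t \<Longrightarrow> 0 < s \<Longrightarrow> c * f t - s * \<beta> - p t / s \<le> g' t"
    and "0 < c"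
  shows "(f \<longlongrightarrow> 0) at_top"
proof (rule tendsto_zero_if_antimono_arbitrarily_small[OF f_nonneg])
  fix s t :: real assume "0 \<le> s" "s \<le> t"
  then show "f t \<le> f s" using increment_le_of_deriv_le[OF df, of 0 s t] p_nonneg by simp
next
  fix \<epsilon> :: real assume "0 < \<epsilon>"
  show "\<exists>t\<ge>0. f t < \<epsilon>"
  proof (rule ccontr)
    assume "\<not> ?thesis"
    then have f_ge: "\<epsilon> \<le> f t" if "0 \<le> t" for t using that by (auto simp: not_less)
    define s where "s = c * \<epsilon> / (2 * (\<bar>\<beta>\<bar> + 1))"
    have "0 < s" using \<open>0 < c\<close> \<open>0 < \<epsilon>\<close> by (simp add: s_def)
    have "s * \<beta> \<le> s * (\<bar>\<beta>\<bar> + 1)" using \<open>0 < s\<close> by (intro mult_left_mono) auto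
    also have "\<dots> = c * \<epsilon> / 2" using abs_ge_zero[of \<beta>] by (simp add: s_def field_simps)
    finally have "s * \<beta> \<le> c * \<epsilon> / 2" .
    define h where "h t = f t / s - g t" for t
    have "(h has_real_derivative (- p t / s - g' t)) (at t within {0..})" if "0 \<le> t" for t
      unfolding h_def[abs_def] using DERIV_diff[OF DERIV_cdivide[OF df[OF that]] dg[OF that]] by simp
    moreover have "- p t / s - g' t \<le> - (c * \<epsilon> / 2)" if "0 \<le> t" for t
    proof -
      have "c * \<epsilon> \<le> c * f t" using f_ge[OF that] \<open>0 < c\<close> by simp
      then show ?thesis using g'_lower[OF that \<open>0 < s\<close>] \<open>s * \<beta> \<le> c * \<epsilon> / 2\<close> by linarith
    qed
    ultimately have "\<exists>t\<ge>0. h t < - B"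
      using \<open>0 < c\<close> \<open>0 < \<epsilon>\<close>
      by (intro deriv_le_neg_imp_unbounded_below[of h "\<lambda>t. - p t / s - g' t" "c * \<epsilon> / 2"]) auto
    then obtain t where "0 \<le> t" "h t < - B" by blast
    moreover have "0 \<le> f t / s" using f_nonneg[OF \<open>0 \<le> t\<close>] \<open>0 < s\<close> by simp
    ultimately show False using g_bound[OF \<open>0 \<le> t\<close>] by (simp add: h_def)
  qed
qed

lemma lindblad_solution_diss_tendsto_zero:
  fixes \<rho> :: "real \<Rightarrow> 'n::finite cmat"
  assumes "hermitian H" and solution: "lindblad_solution H L I \<rho>" and "psd V" "0 < c"
    and "op_le (gen H L I V) 0" and diss: "op_le (c *\<^sub>R V) (diss H L I V)"
  shows "((\<lambda>t. Re (trace (V ** \<rho> t))) \<longlongrightarrow> 0) at_top"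
proof -
  have hV: "cadj V = V" using \<open>psd V\<close> by (simp add: psd_def hermitian_def)
  define P where "P = - gen H L I V"
  have "psd P" using \<open>op_le (gen H L I V) 0\<close> by (simp add: op_le_def P_def)
  have hP: "cadj P = P" using \<open>psd P\<close> by (simp add: psd_def hermitian_def)
  have psd_\<rho>: "psd (\<rho> t)" and density_\<rho>: "density (\<rho> t)" if "0 \<le> t" for t
    using lindblad_solution_psd[OF assms(1) solution that] lindblad_solution_trace[OF solution that]
    by (simp_all add: density_def)
  define \<beta> where "\<beta> = (\<Sum>i\<in>UNIV. \<Sum>j\<in>UNIV. cmod ((V ** P ** V)$i$j))"
  have VPV_bound: "Re (trace ((V ** P ** V) ** \<rho> t)) \<le> \<beta>" if "0 \<le> t" for t
    unfolding \<beta>_def using density_\<rho>[OF that]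
    by (intro trace_mult_density_le) (simp_all add: hermitian_def cadj_mult hV hP matrix_mul_assoc)
  have g'_lower: "c * Re (trace (V ** \<rho> t)) - s * \<beta> - Re (trace (P ** \<rho> t)) / s
      \<le> Re (trace (gen H L I (V ** V) ** \<rho> t))" if "0 \<le> t" "0 < s" for t s
  proof -
    have "gen H L I (V ** V) = diss H L I V - (P ** V + V ** P)"
      by (simp add: diss_def hV P_def matrix_uminus_left matrix_uminus_right)
    then have "Re (trace (gen H L I (V ** V) ** \<rho> t))
        = Re (trace (diss H L I V ** \<rho> t)) - Re (trace ((P ** V + V ** P) ** \<rho> t))"
      by (simp add: matrix_diff_rdistrib trace_sub)
    moreover have "c * Re (trace (V ** \<rho> t)) \<le> Re (trace (diss H L I V ** \<rho> t))"
      using trace_mult_mono[OF psd_\<rho>[OF that(1)] diss] by (simp add: matrix_scaleR_left trace_scaleR)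
    moreover have "s * Re (trace ((V ** P ** V) ** \<rho> t)) \<le> s * \<beta>"
      using VPV_bound[OF that(1)] \<open>0 < s\<close> by simp
    ultimately show ?thesis
      using Re_trace_anticommutator_le[OF \<open>psd P\<close> hV psd_\<rho>[OF that(1)] \<open>0 < s\<close>] by simp
  qed
  show ?thesis
  proof (rule tendsto_zero_if_dissipation_dominates[OF _ Re_trace_mult_solution_deriv[OF solution]])
    show "((\<lambda>t. Re (trace (V ** \<rho> t))) has_real_derivative - Re (trace (P ** \<rho> t))) (at t within {0..})"
      if "0 \<le> t" for t
      using Re_trace_mult_solution_deriv[OF solution that, of V]
      by (simp add: P_def matrix_uminus_left trace_uminus)
    show "0 \<le> Re (trace (V ** \<rho> t))" "0 \<le> Re (trace (P ** \<rho> t))" if "0 \<le> t" for t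
      using trace_mult_psd_nonneg[OF _ psd_\<rho>[OF that]] \<open>psd V\<close> \<open>psd P\<close> by auto
    show "Re (trace ((V ** V) ** \<rho> t)) \<le> (\<Sum>i\<in>UNIV. \<Sum>j\<in>UNIV. cmod ((V ** V)$i$j))" if "0 \<le> t" for t
      using density_\<rho>[OF that]
      by (intro trace_mult_density_le) (simp_all add: hermitian_def cadj_mult hV)
  qed (use g'_lower \<open>0 < c\<close> in auto)
qed

section \<open>Ground-state stability\<close>

text \<open>The limit of \<open>tr (X \<rho>\<^sub>t)\<close> is \<open>d\<close>, and since \<open>tr (X \<rho>\<^sub>t) \<ge> min_eig X \<ge> d\<close> along the solution this
  also forces \<open>min_eig X = d\<close>.\<close>
lemma ags_stable_if_shifted_tendsto_zero:
  fixes X :: "'n::finite cmat"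
  assumes "hermitian H" and shifted: "psd (X - const d)"
    and lim0: "\<And>\<rho>. lindblad_solution H L I \<rho> \<Longrightarrow> ((\<lambda>t. Re (trace ((X - const d) ** \<rho> t))) \<longlongrightarrow> 0) at_top"
  shows "ags_stable H L I X"
  unfolding ags_stable_iff_solutions
proof (intro allI impI)
  fix \<rho> :: "real \<Rightarrow> 'n cmat"
  assume solution: "lindblad_solution H L I \<rho>"
  have hX: "hermitian X"
    using hermitian_add[OF psd_imp_hermitian[OF shifted] hermitian_const[of d]] by simp
  have trace_eq: "trace (X ** \<rho> t) = complex_of_real (Re (trace ((X - const d) ** \<rho> t)) + d)"
    if "0 \<le> t" for t
  proof -
    have "Im (trace (X ** \<rho> t)) = 0"
      using trace_mult_hermitian_real[OF hX lindblad_solution_hermitian[OF solution \<open>hermitian H\<close> that]] .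
    moreover have "trace (X ** \<rho> t) = trace ((X - const d) ** \<rho> t) + complex_of_real d"
      by (simp add: matrix_diff_rdistrib trace_sub trace_const_mult lindblad_solution_trace[OF solution that])
    ultimately show ?thesis by (simp add: complex_eq_iff)
  qed
  have lim: "((\<lambda>t. Re (trace ((X - const d) ** \<rho> t)) + d) \<longlongrightarrow> d) at_top"
    using tendsto_add[OF lim0[OF solution] tendsto_const[of d]] by simp
  have "min_eig X = d"
  proof (rule antisym)
    have "min_eig X \<le> Re (trace ((X - const d) ** \<rho> t)) + d" if "0 \<le> t" for t
      using trace_mult_psd_nonneg[OF psd_minus_min_eig[OF hX] lindblad_solution_psd[OF \<open>hermitian H\<close> solution that]]
      by (simp add: matrix_diff_rdistrib trace_sub trace_const_mult lindblad_solution_trace[OF solution that])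
    then show "min_eig X \<le> d"
      by (intro tendsto_lowerbound[OF lim]) (auto intro: eventually_mono[OF eventually_ge_at_top[of 0]])
  qed (rule min_eig_greatest[OF hX shifted])
  then show "((\<lambda>t. trace (X ** \<rho> t)) \<longlongrightarrow> complex_of_real (min_eig X)) at_top"
    using tendsto_of_real[OF lim]
    by (rule_tac Lim_transform_eventually) (auto intro: eventually_mono[OF eventually_ge_at_top[of 0]]
        simp: trace_eq)
qed

lemma ags_stable_of_exp_decay:
  assumes "hermitian H" "psd (X - const d)" "0 < c"
    and "op_le (gen H L I (X - const d)) ((-c) *\<^sub>R (X - const d))"
  shows "ags_stable H L I X"
  by (rule ags_stable_if_shifted_tendsto_zero[OF assms(1,2)
        lindblad_solution_exp_decay_tendsto_zero[OF assms(1) _ assms(2-4)]])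

lemma ags_stable_of_diss:
  assumes "hermitian H" "psd (X - const d)" "0 < c"
    and "op_le (gen H L I X) 0" "op_le (c *\<^sub>R (X - const d)) (diss H L I (X - const d))"
  shows "ags_stable H L I X"
proof -
  have gen_shifted: "op_le (gen H L I (X - const d)) 0" using assms(4) by (simp add: gen_diff gen_const)
  show ?thesis
    by (rule ags_stable_if_shifted_tendsto_zero[OF assms(1,2)
          lindblad_solution_diss_tendsto_zero[OF assms(1) _ assms(2,3) gen_shifted assms(5)]])
qed

lemma gen_union_add:
  assumes "finite I" "finite J" "I \<inter> J = {}"
  shows "gen H L (I \<union> J) (X + Y - const d)
    = gen H L I (X - const d) + (gen H L (I \<union> J) Y + (\<Sum>k\<in>J. genL (L k) X))"
proof -
  have X_part: "gen H L (I \<union> J) (X - const d) = gen H L I (X - const d) + (\<Sum>k\<in>J. genL (L k) X)"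
    using assms by (simp add: gen_union genL_diff genL_const)
  have "gen H L (I \<union> J) (X + Y - const d) = gen H L (I \<union> J) (X - const d) + gen H L (I \<union> J) Y"
    using gen_add[of H L "I \<union> J" "X - const d" Y] by (simp only: diff_add_eq)
  then show ?thesis unfolding X_part by (simp add: add.assoc)
qed

lemma exp_decay_add:
  assumes "finite I" "finite J" "I \<inter> J = {}"
    and "op_le (gen H L I (X - const d)) ((-c) *\<^sub>R (X - const d))"
    and "op_le (gen H L (I \<union> J) Y + (\<Sum>k\<in>J. genL (L k) X)) ((-c) *\<^sub>R Y)"
  shows "op_le (gen H L (I \<union> J) (X + Y - const d)) ((-c) *\<^sub>R (X + Y - const d))"
proof -
  have "(-c) *\<^sub>R (X + Y - const d) = (-c) *\<^sub>R (X - const d) + (-c) *\<^sub>R Y" by (simp add: algebra_simps)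
  then show ?thesis unfolding gen_union_add[OF assms(1-3)] by (simp only: op_le_add[OF assms(4,5)])
qed

lemma gen_nonpos_add:
  assumes "finite I" "finite J" "I \<inter> J = {}"
    and "op_le (gen H L I X) 0" and "op_le (gen H L (I \<union> J) Y + (\<Sum>k\<in>J. genL (L k) X)) 0"
  shows "op_le (gen H L (I \<union> J) (X + Y)) 0"
  using op_le_add[OF assms(4,5)] gen_union_add[OF assms(1-3), of H L X Y 0]
  by (simp add: const_def)

text \<open>The couplings in \<open>J\<close> only enlarge the dissipation of \<open>X\<close>, and the cross terms of the
  dissipation of \<open>X + Y\<close> are exactly those assumed for \<open>Y\<close>.\<close>
lemma diss_lower_bound_add:
  assumes "finite I" "finite J" "I \<inter> J = {}" "hermitian X" "hermitian Y"
    and "op_le (c *\<^sub>R (X - const d)) (diss H L I (X - const d))"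
    and "op_le (c *\<^sub>R Y) (diss H L (I \<union> J) Y
           + 2 *\<^sub>R (\<Sum>k\<in>I \<union> J. mRe (comm (cadj (L k)) X ** comm Y (L k))))"
  shows "op_le (c *\<^sub>R (X + Y - const d)) (diss H L (I \<union> J) (X + Y - const d))"
proof -
  define A where "A = X - const d"
  have hA: "cadj A = A" and hY: "cadj Y = Y"
    using hermitian_diff[OF assms(4) hermitian_const] assms(5) by (simp_all add: A_def hermitian_def)
  have A_part: "diss H L (I \<union> J) A = diss H L I A + (\<Sum>k\<in>J. comm (cadj (L k)) A ** comm A (L k))"
    using assms(1-3) by (simp add: diss_eq_sum_comm[OF hA] sum.union_disjoint)
  have "comm (cadj (L k)) A = comm (cadj (L k)) X" for k
    by (simp add: A_def comm_diff_right comm_const_right)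
  moreover have "X + Y - const d = A + Y" by (simp add: A_def)
  ultimately have "diss H L (I \<union> J) (X + Y - const d)
      = diss H L I A + (\<Sum>k\<in>J. comm (cadj (L k)) A ** comm A (L k))
        + (diss H L (I \<union> J) Y + 2 *\<^sub>R (\<Sum>k\<in>I \<union> J. mRe (comm (cadj (L k)) X ** comm Y (L k))))"
    by (simp add: diss_add[OF hA hY] A_part algebra_simps)
  moreover have J_psd: "op_le 0 (\<Sum>k\<in>J. comm (cadj (L k)) A ** comm A (L k))"
    unfolding op_le_def by (simp add: psd_sum psd_comm_cadj_comm[OF hA])
  moreover have "c *\<^sub>R (X + Y - const d) = c *\<^sub>R A + 0 + c *\<^sub>R Y"
    by (simp add: A_def algebra_simps)
  ultimately show ?thesis
    using op_le_add[OF op_le_add[OF assms(6)[folded A_def] J_psd] assms(7)] by simp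
qed

theorem corollary21:
  fixes H :: "'n::finite cmat"
    and W :: "nat \<Rightarrow> 'n cmat"
    and L :: "nat \<Rightarrow> 'n cmat"
    and N n M K :: nat
  assumes H_herm: "hermitian H"
    and W_psd: "\<And>j. j \<in> {1..N} \<Longrightarrow> psd (W j)"
    and W_min: "\<And>j. j \<in> {1..N} \<Longrightarrow> min_eig (W j) = 0"
    and W_comm: "\<And>j. j \<in> {1..N} \<Longrightarrow> W j ** H = H ** W j"
    and n_ge: "1 \<le> n" and n_lt: "n < N"
    and M_le: "M \<le> K"
  defines "Wt \<equiv> (\<lambda>m. \<Sum>j\<in>{1..m}. W j)"
    and "d \<equiv> min_eig (\<Sum>j\<in>{1..n}. W j)"
  shows
    "((\<exists>c>0. op_le (gen H L {1..M} (Wt n - const d)) ((-c) *\<^sub>R (Wt n - const d)) \<and>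
              op_le (gen H L {1..K} (W (n+1)) + (\<Sum>k\<in>{M+1..K}. genL (L k) (Wt n)))
                    ((-c) *\<^sub>R W (n+1)))
       \<longrightarrow> ags_stable H L {1..K} (Wt (n+1)))
   \<and> ((\<exists>c>0. op_le (gen H L {1..M} (Wt n)) 0 \<and>
              op_le (c *\<^sub>R (Wt n - const d)) (diss H L {1..M} (Wt n - const d)) \<and>
              op_le (gen H L {1..K} (W (n+1)) + (\<Sum>k\<in>{M+1..K}. genL (L k) (Wt n))) 0 \<and>
              op_le (c *\<^sub>R W (n+1))
                    (diss H L {1..K} (W (n+1)) +
                     2 *\<^sub>R (\<Sum>k\<in>{1..K}. mRe (comm (cadj (L k)) (Wt n) ** comm (W (n+1)) (L k)))))
       \<longrightarrow> ags_stable H L {1..K} (Wt (n+1)))"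
proof -
  have couplings: "{1..K} = {1..M} \<union> {M+1..K}" and disjoint: "{1..M} \<inter> {M+1..K} = {}"
    using M_le by auto
  note split_couplings = finite_atLeastAtMost finite_atLeastAtMost disjoint
  have "psd (W (n+1))" and "psd (Wt n)" using W_psd n_lt by (auto simp: Wt_def intro!: psd_sum)
  have "psd (Wt n - const d)"
    using psd_minus_min_eig[OF psd_imp_hermitian[OF \<open>psd (Wt n)\<close>]] by (simp add: d_def Wt_def)
  have Wt_Suc: "Wt (n+1) = Wt n + W (n+1)" by (simp add: Wt_def)
  have shifted: "psd (Wt n + W (n+1) - const d)"
    using psd_add[OF \<open>psd (Wt n - const d)\<close> \<open>psd (W (n+1))\<close>] by (simp add: diff_add_eq)
  show ?thesis
    unfolding Wt_Suc
  proof (intro conjI impI; elim exE conjE)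
    fix c :: real
    assume "0 < c"
      and "op_le (gen H L {1..M} (Wt n - const d)) ((-c) *\<^sub>R (Wt n - const d))"
      and "op_le (gen H L {1..K} (W (n+1)) + (\<Sum>k\<in>{M+1..K}. genL (L k) (Wt n))) ((-c) *\<^sub>R W (n+1))"
    then show "ags_stable H L {1..K} (Wt n + W (n+1))"
      unfolding couplings
      by (intro ags_stable_of_exp_decay[OF H_herm shifted \<open>0 < c\<close>] exp_decay_add[OF split_couplings])
  next
    fix c :: real
    assume "0 < c" and "op_le (gen H L {1..M} (Wt n)) 0"
      and "op_le (c *\<^sub>R (Wt n - const d)) (diss H L {1..M} (Wt n - const d))"
      and "op_le (gen H L {1..K} (W (n+1)) + (\<Sum>k\<in>{M+1..K}. genL (L k) (Wt n))) 0"
      and "op_le (c *\<^sub>R W (n+1)) (diss H L {1..K} (W (n+1))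
             + 2 *\<^sub>R (\<Sum>k\<in>{1..K}. mRe (comm (cadj (L k)) (Wt n) ** comm (W (n+1)) (L k))))"
    then show "ags_stable H L {1..K} (Wt n + W (n+1))"
      unfolding couplings using \<open>psd (Wt n)\<close> \<open>psd (W (n+1))\<close>
      by (intro ags_stable_of_diss[OF H_herm shifted \<open>0 < c\<close>] gen_nonpos_add[OF split_couplings]
          diss_lower_bound_add[OF split_couplings] psd_imp_hermitian)
  qed
qed

end
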